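(* Let $n\ge 2$ and let $X$ be a $\mathcal D$-subspace of $\mathbb P=PG(\mathbb E,\mathbb{F}_q)=PG(n^2-1,q)$. Then there exist two Desarguesian $(n-1)$-spreads $\mathcal D_1(X)$ and $\mathcal D_2(X)$ of $\mathbb P$ such that: (D1) $X\in\mathcal D_i(X)$ and $\mathcal R_i\subset\mathcal D_i(X)$ for $i=1,2$; (D2) for $i=1,2$ there is a linear collineation $\Xi_i$ of $\mathbb P$ fixing $\mathcal D_i(X)$ which induces a semilinear collineation $\tilde\Xi_i$ of order $n$ of $\Pi_{n-1}(\mathcal D_i(X))\cong PG(n-1,q^n)$ whose set of fixed points is exactly $\mathcal R_i$, and $\mathcal R_i$ is a subgeometry of $\Pi_{n-1}(\mathcal D_i(X))$ isomorphic to $PG(n-1,q)$. Moreover there exists an involutory collineation $\Phi$ of $\mathbb P$ such that (D3) $\Phi$ fixes $X$ pointwise, and (D4) $\mathcal D_1(X)^\Phi=\mathcal D_2(X)$.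
   Context: $\mathbb E=\mathrm{End}(\mathbb{F}_{q^n},\mathbb{F}_q)$; $\langle\varphi\rangle_q$ is the point of $\mathbb P$ defined by $\varphi\ne0$; $t_\lambda:x\mapsto\lambda x$. The Segre variety $\mathcal S_{n,n}$ is the set of points $\langle\varphi\rangle_q$ with $\varphi$ of rank 1; its maximal subspaces are $(n-1)$-dimensional and form two systems $\mathcal R_1,\mathcal R_2$, where $\mathcal R_1=\{\{\langle t_\alpha\circ\mathrm{Tr}\circ t_\lambda\rangle_q:\alpha\in\mathbb{F}_{q^n}^*\}:\lambda\in\mathbb{F}_{q^n}^*\}$ and $\mathcal R_2=\{\{\langle t_\lambda\circ\mathrm{Tr}\circ t_\alpha\rangle_q:\alpha\in\mathbb{F}_{q^n}^*\}:\lambda\in\mathbb{F}_{q^n}^*\}$, $\mathrm{Tr}$ the trace $\mathbb{F}_{q^n}\to\mathbb{F}_q$. $H(\mathcal S_{n,n})$ is the subgroup of $PGL(n^2,q)$ fixing each of $\mathcal R_1$ and $\mathcal R_2$. Let $\mathcal I=\{\langle t_\lambda\rangle_q:\lambda\in\mathbb{F}_{q^n}^*\}$, an $(n-1)$-dimensional subspace of $\mathbb P$; a $\mathcal D$-subspace of $\mathbb P$ is any subspace in the orbit of $\mathcal I$ under $H(\mathcal S_{n,n})$. An $(n-1)$-spread of $\mathbb P$ is a partition of its points into $(n-1)$-dimensional subspaces; it is Desarguesian if it arises as the set of subspaces $\{\langle\mathbf v\rangle_{q^n}\}$ viewed over $\mathbb F_q$ when the underlying $\mathbb F_q$-space is endowed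 with an $\mathbb F_{q^n}$-vector space structure. For a Desarguesian $(n-1)$-spread $\mathcal D$ of $\mathbb P$, $\Pi_{n-1}(\mathcal D)$ is the projective space $\cong PG(n-1,q^n)$ whose points are the elements of $\mathcal D$ and whose subspaces are the sets of spread elements contained in subspaces of $\mathbb P$ spanned by spread elements. A subgeometry isomorphic to $PG(n-1,q)$ of $PG(n-1,q^n)$ is the point set defined by an $\mathbb F_q$-subspace of dimension $n$ spanning the underlying $\mathbb F_{q^n}$-space. *)

theory Defs
  imports Main
begin

text \<open>Setting: the type 'a is the finite field F_{q^n} (CARD('a) = q^n), and
F_q is its subfield Kf q = {x. x^q = x}. The F_q-space E = End(F_{q^n},F_q)
is the set of F_q-linear maps 'a => 'a; points of P are the classes of
nonzero maps modulo nonzero F_q-scalars (represented as sets of maps).\<close>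

definition Kf :: "nat \<Rightarrow> 'a::{finite,field} set" where
  "Kf q = {x. x ^ q = x}"

definition kscal :: "'a::field \<Rightarrow> ('a \<Rightarrow> 'a) \<Rightarrow> ('a \<Rightarrow> 'a)" where
  "kscal c \<phi> = (\<lambda>x. c * \<phi> x)"

definition fadd :: "('a::field \<Rightarrow> 'a) \<Rightarrow> ('a \<Rightarrow> 'a) \<Rightarrow> ('a \<Rightarrow> 'a)" where
  "fadd \<phi> \<psi> = (\<lambda>x. \<phi> x + \<psi> x)"

definition fzero :: "'a::field \<Rightarrow> 'a" where
  "fzero = (\<lambda>x. 0)"

definition Emaps :: "nat \<Rightarrow> ('a::{finite,field} \<Rightarrow> 'a) set" where
  "Emaps q = {\<phi>. (\<forall>x y. \<phi> (x + y) = \<phi> x + \<phi> y) \<and> (\<forall>c\<in>Kf q. \<forall>x. \<phi> (c * x) = c * \<phi> x)}"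

definition pt :: "nat \<Rightarrow> ('a::{finite,field} \<Rightarrow> 'a) \<Rightarrow> ('a \<Rightarrow> 'a) set" where
  "pt q \<phi> = {kscal c \<phi> | c. c \<in> Kf q \<and> c \<noteq> 0}"

definition Points :: "nat \<Rightarrow> ('a::{finite,field} \<Rightarrow> 'a) set set" where
  "Points q = {pt q \<phi> | \<phi>. \<phi> \<in> Emaps q \<and> \<phi> \<noteq> fzero}"

definition Lines :: "nat \<Rightarrow> ('a::{finite,field} \<Rightarrow> 'a) set set set" where
  "Lines q = {{pt q (fadd (kscal a \<phi>) (kscal b \<psi>)) | a b. a \<in> Kf q \<and> b \<in> Kf q \<and> (a \<noteq> 0 \<or> b \<noteq> 0)}
      | \<phi> \<psi>. \<phi> \<in> Emaps q \<and> \<psi> \<in> Emaps q \<and> \<phi> \<noteq> fzero \<and> \<psi> \<noteq> fzero \<and> pt q \<phi> \<noteq> pt q \<psi>}"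

definition tr :: "nat \<Rightarrow> nat \<Rightarrow> 'a::{finite,field} \<Rightarrow> 'a" where
  "tr q n x = (\<Sum>i<n. x ^ (q ^ i))"

definition Iset :: "nat \<Rightarrow> ('a::{finite,field} \<Rightarrow> 'a) set set" where
  "Iset q = {pt q (\<lambda>x. l * x) | l. l \<noteq> 0}"

definition R1 :: "nat \<Rightarrow> nat \<Rightarrow> ('a::{finite,field} \<Rightarrow> 'a) set set set" where
  "R1 q n = {{pt q (\<lambda>x. a * tr q n (l * x)) | a. a \<noteq> 0} | l. l \<noteq> 0}"

definition R2 :: "nat \<Rightarrow> nat \<Rightarrow> ('a::{finite,field} \<Rightarrow> 'a) set set set" where
  "R2 q n = {{pt q (\<lambda>x. l * tr q n (a * x)) | a. a \<noteq> 0} | l. l \<noteq> 0}"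

text \<open>F_q-linear bijections of E (they induce the elements of PGL(n^2,q)).\<close>
definition klin_bij :: "nat \<Rightarrow> (('a::{finite,field} \<Rightarrow> 'a) \<Rightarrow> ('a \<Rightarrow> 'a)) \<Rightarrow> bool" where
  "klin_bij q f \<longleftrightarrow> bij_betw f (Emaps q) (Emaps q) \<and>
     (\<forall>\<phi>\<in>Emaps q. \<forall>\<psi>\<in>Emaps q. f (fadd \<phi> \<psi>) = fadd (f \<phi>) (f \<psi>)) \<and>
     (\<forall>c\<in>Kf q. \<forall>\<phi>\<in>Emaps q. f (kscal c \<phi>) = kscal c (f \<phi>))"

definition pimg :: "(('a \<Rightarrow> 'a) \<Rightarrow> ('a \<Rightarrow> 'a)) \<Rightarrow> ('a \<Rightarrow> 'a) set set \<Rightarrow> ('a \<Rightarrow> 'a) set set" where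
  "pimg f S = (\<lambda>p. f ` p) ` S"

definition simg :: "(('a \<Rightarrow> 'a) \<Rightarrow> ('a \<Rightarrow> 'a)) \<Rightarrow> ('a \<Rightarrow> 'a) set set set \<Rightarrow> ('a \<Rightarrow> 'a) set set set" where
  "simg f D = pimg f ` D"

text \<open>Elements of H(S_{n,n}): linear collineations fixing R1 and R2.\<close>
definition H_Segre :: "nat \<Rightarrow> nat \<Rightarrow> (('a::{finite,field} \<Rightarrow> 'a) \<Rightarrow> ('a \<Rightarrow> 'a)) \<Rightarrow> bool" where
  "H_Segre q n f \<longleftrightarrow> klin_bij q f \<and> simg f (R1 q n) = R1 q n \<and> simg f (R2 q n) = R2 q n"

definition D_subspace :: "nat \<Rightarrow> nat \<Rightarrow> ('a::{finite,field} \<Rightarrow> 'a) set set \<Rightarrow> bool" where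
  "D_subspace q n X \<longleftrightarrow> (\<exists>f. H_Segre q n f \<and> X = pimg f (Iset q))"

definition fstruct :: "nat \<Rightarrow> ('a::{finite,field} \<Rightarrow> ('a \<Rightarrow> 'a) \<Rightarrow> ('a \<Rightarrow> 'a)) \<Rightarrow> bool" where
  "fstruct q sm \<longleftrightarrow>
     (\<forall>a. \<forall>\<phi>\<in>Emaps q. sm a \<phi> \<in> Emaps q) \<and>
     (\<forall>a. \<forall>\<phi>\<in>Emaps q. \<forall>\<psi>\<in>Emaps q. sm a (fadd \<phi> \<psi>) = fadd (sm a \<phi>) (sm a \<psi>)) \<and>
     (\<forall>a b. \<forall>\<phi>\<in>Emaps q. sm (a + b) \<phi> = fadd (sm a \<phi>) (sm b \<phi>)) \<and>
     (\<forall>a b. \<forall>\<phi>\<in>Emaps q. sm (a * b) \<phi> = sm a (sm b \<phi>)) \<and>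
     (\<forall>\<phi>\<in>Emaps q. sm 1 \<phi> = \<phi>) \<and>
     (\<forall>c\<in>Kf q. \<forall>\<phi>\<in>Emaps q. sm c \<phi> = kscal c \<phi>)"

text \<open>The spread element <phi>_{q^n}, viewed as a set of points of P.\<close>
definition Fpt :: "nat \<Rightarrow> ('a::{finite,field} \<Rightarrow> ('a \<Rightarrow> 'a) \<Rightarrow> ('a \<Rightarrow> 'a)) \<Rightarrow> ('a \<Rightarrow> 'a) \<Rightarrow> ('a \<Rightarrow> 'a) set set" where
  "Fpt q sm \<phi> = {pt q (sm l \<phi>) | l. l \<noteq> 0}"

definition spread_of :: "nat \<Rightarrow> ('a::{finite,field} \<Rightarrow> ('a \<Rightarrow> 'a) \<Rightarrow> ('a \<Rightarrow> 'a)) \<Rightarrow> ('a \<Rightarrow> 'a) set set set" where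
  "spread_of q sm = {Fpt q sm \<phi> | \<phi>. \<phi> \<in> Emaps q \<and> \<phi> \<noteq> fzero}"

definition desarg_spread :: "nat \<Rightarrow> ('a::{finite,field} \<Rightarrow> 'a) set set set \<Rightarrow> bool" where
  "desarg_spread q D \<longleftrightarrow> (\<exists>sm. fstruct q sm \<and> D = spread_of q sm)"

fun lincomb :: "('s \<Rightarrow> ('a \<Rightarrow> 'a) \<Rightarrow> ('a \<Rightarrow> 'a)) \<Rightarrow> 's list \<Rightarrow> ('a::field \<Rightarrow> 'a) list \<Rightarrow> ('a \<Rightarrow> 'a)" where
  "lincomb sc (c # cs) (v # vs) = fadd (sc c v) (lincomb sc cs vs)"
| "lincomb sc _ _ = fzero"

definition Kspan :: "nat \<Rightarrow> ('a::{finite,field} \<Rightarrow> 'a) list \<Rightarrow> ('a \<Rightarrow> 'a) set" where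
  "Kspan q ws = {lincomb kscal cs ws | cs. length cs = length ws \<and> set cs \<subseteq> Kf q}"

definition Kindep :: "nat \<Rightarrow> ('a::{finite,field} \<Rightarrow> 'a) list \<Rightarrow> bool" where
  "Kindep q ws \<longleftrightarrow> (\<forall>cs. length cs = length ws \<and> set cs \<subseteq> Kf q \<and> lincomb kscal cs ws = fzero
      \<longrightarrow> set cs \<subseteq> {0})"

definition Fspans :: "('a::{finite,field} \<Rightarrow> ('a \<Rightarrow> 'a) \<Rightarrow> ('a \<Rightarrow> 'a)) \<Rightarrow> ('a \<Rightarrow> 'a) set \<Rightarrow> ('a \<Rightarrow> 'a) set \<Rightarrow> bool" where
  "Fspans sm W E \<longleftrightarrow> (\<forall>\<phi>\<in>E. \<exists>cs vs. length cs = length vs \<and> set vs \<subseteq> W \<and> \<phi> = lincomb sm cs vs)"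

text \<open>R is a subgeometry PG(n-1,q) of Pi_{n-1}(spread_of q sm): the point set defined
 by an n-dimensional F_q-subspace W of E (W = K-span of n K-independent vectors)
 that spans E over F_{q^n}.\<close>
definition subgeometry :: "nat \<Rightarrow> nat \<Rightarrow> ('a::{finite,field} \<Rightarrow> ('a \<Rightarrow> 'a) \<Rightarrow> ('a \<Rightarrow> 'a)) \<Rightarrow> ('a \<Rightarrow> 'a) set set set \<Rightarrow> bool" where
  "subgeometry q n sm R \<longleftrightarrow> (\<exists>ws. length ws = n \<and> set ws \<subseteq> Emaps q \<and> Kindep q ws \<and>
      Fspans sm (Kspan q ws) (Emaps q) \<and>
      R = {Fpt q sm w | w. w \<in> Kspan q ws \<and> w \<noteq> fzero})"

definition field_aut :: "('a::field \<Rightarrow> 'a) \<Rightarrow> bool" where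
  "field_aut \<sigma> \<longleftrightarrow> bij \<sigma> \<and> (\<forall>a b. \<sigma> (a + b) = \<sigma> a + \<sigma> b) \<and> (\<forall>a b. \<sigma> (a * b) = \<sigma> a * \<sigma> b)"

text \<open>The collineation of Pi_{n-1}(spread_of q sm) induced by f is semilinear:
 it is induced by a sigma-semilinear bijection g of the F_{q^n}-space E.\<close>
definition induced_semilinear :: "nat \<Rightarrow> ('a::{finite,field} \<Rightarrow> ('a \<Rightarrow> 'a) \<Rightarrow> ('a \<Rightarrow> 'a)) \<Rightarrow> (('a \<Rightarrow> 'a) \<Rightarrow> ('a \<Rightarrow> 'a)) \<Rightarrow> bool" where
  "induced_semilinear q sm f \<longleftrightarrow> (\<exists>\<sigma> g. field_aut \<sigma> \<and> bij_betw g (Emaps q) (Emaps q) \<and>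
      (\<forall>\<phi>\<in>Emaps q. \<forall>\<psi>\<in>Emaps q. g (fadd \<phi> \<psi>) = fadd (g \<phi>) (g \<psi>)) \<and>
      (\<forall>l. \<forall>\<phi>\<in>Emaps q. g (sm l \<phi>) = sm (\<sigma> l) (g \<phi>)) \<and>
      (\<forall>\<phi>\<in>Emaps q. \<phi> \<noteq> fzero \<longrightarrow> pimg f (Fpt q sm \<phi>) = Fpt q sm (g \<phi>)))"

definition cond_D2 :: "nat \<Rightarrow> nat \<Rightarrow> ('a::{finite,field} \<Rightarrow> 'a) set set set \<Rightarrow> ('a \<Rightarrow> 'a) set set set \<Rightarrow> bool" where
  "cond_D2 q n D R \<longleftrightarrow> (\<exists>sm. fstruct q sm \<and> D = spread_of q sm \<and>
      (\<exists>f. klin_bij q f \<and> simg f D = D \<and> induced_semilinear q sm f \<and>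
           (\<forall>S\<in>D. (pimg f ^^ n) S = S) \<and>
           (\<forall>k. 0 < k \<and> k < n \<longrightarrow> (\<exists>S\<in>D. (pimg f ^^ k) S \<noteq> S)) \<and>
           {S \<in> D. pimg f S = S} = R) \<and>
      subgeometry q n sm R)"

definition collineation :: "nat \<Rightarrow> (('a::{finite,field} \<Rightarrow> 'a) set \<Rightarrow> ('a \<Rightarrow> 'a) set) \<Rightarrow> bool" where
  "collineation q \<Phi> \<longleftrightarrow> bij_betw \<Phi> (Points q) (Points q) \<and> (\<forall>L\<in>Lines q. \<Phi> ` L \<in> Lines q)"

definition involutory_collineation :: "nat \<Rightarrow> (('a::{finite,field} \<Rightarrow> 'a) set \<Rightarrow> ('a \<Rightarrow> 'a) set) \<Rightarrow> bool" where
  "involutory_collineation q \<Phi> \<longleftrightarrow> collineation q \<Phi> \<and> (\<forall>x\<in>Points q. \<Phi> (\<Phi> x) = x) \<and>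
      (\<exists>x\<in>Points q. \<Phi> x \<noteq> x)"

end

theory Submission
  imports Defs "HOL-Computational_Algebra.Polynomial" "HOL-Computational_Algebra.Primes"
begin

(* The standard model of the
   configuration lives at X = I:
   - left multiplication turns E into an F_{q^n}-space; its spread D0 contains I and R1,
     and the Frobenius collineation phi |-> (x |-> phi(x)^q) fixes D0, acts on
     Pi(D0) = PG(n-1,q^n) semilinearly with order n, and its fixed elements are exactly R1,
     a subgeometry spanned by the trace functionals x |-> Tr(m*x);
   - the adjoint phi |-> phi^T with respect to the trace form Tr(x*y) is an F_q-linear
     involution of E that fixes every point of I and maps R1 onto R2.
   A D-subspace is X = f(I) with f linear and fixing R1 and R2, so transporting
   everything along f gives D1 = f(D0), D2 = f(adj(D0)) and Phi = f o adj o f^-1.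
   The file develops, in order: linear algebra over a subfield inside a finite field,
   finite-field facts (Frobenius, trace, F_q-linear functionals), the elementary geometry
   of E, transport of all notions of the statement along linear bijections, the standard
   model with its Frobenius collineation, the trace adjoint, and finally the theorem. *)

section \<open>Linear algebra inside a field over a subfield\<close>

fun fcomb :: "'a::field list \<Rightarrow> 'a list \<Rightarrow> 'a" where
  "fcomb (c # cs) (e # es) = c * e + fcomb cs es"
| "fcomb _ _ = 0"

definition subfield :: "'a::field set \<Rightarrow> bool" where
  "subfield K \<longleftrightarrow> 0 \<in> K \<and> 1 \<in> K \<and> (\<forall>x\<in>K. \<forall>y\<in>K. x + y \<in> K \<and> x * y \<in> K) \<and>
     (\<forall>x\<in>K. - x \<in> K \<and> inverse x \<in> K)"

definition span_over :: "'a::field set \<Rightarrow> 'a list \<Rightarrow> 'a set" where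
  "span_over K es = {fcomb cs es | cs. length cs = length es \<and> set cs \<subseteq> K}"

definition indep_over :: "'a::field set \<Rightarrow> 'a list \<Rightarrow> bool" where
  "indep_over K es \<longleftrightarrow>
     (\<forall>cs. length cs = length es \<and> set cs \<subseteq> K \<and> fcomb cs es = 0 \<longrightarrow> set cs \<subseteq> {0})"

lemma fcomb_diff:
  "length cs = length es \<Longrightarrow> length ds = length es \<Longrightarrow>
   fcomb cs es - fcomb ds es = fcomb (map2 (-) cs ds) es"
proof (induction es arbitrary: cs ds)
  case (Cons e es)
  then obtain c cs' d ds' where "cs = c # cs'" "ds = d # ds'"
    by (cases cs; cases ds) auto
  with Cons show ?case by (simp add: algebra_simps flip: Cons.IH)
qed simp

lemma fcomb_add:
  "length cs = length es \<Longrightarrow> length ds = length es \<Longrightarrow>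
   fcomb cs es + fcomb ds es = fcomb (map2 (+) cs ds) es"
proof (induction es arbitrary: cs ds)
  case (Cons e es)
  then obtain c cs' d ds' where "cs = c # cs'" "ds = d # ds'"
    by (cases cs; cases ds) auto
  with Cons show ?case by (simp add: algebra_simps flip: Cons.IH)
qed simp

lemma fcomb_scale: "fcomb (map ((*) a) cs) es = a * fcomb cs es"
  by (induction cs es rule: fcomb.induct) (auto simp: algebra_simps)

lemma fcomb_sum: "length cs = length es \<Longrightarrow> fcomb cs es = (\<Sum>j<length es. cs ! j * es ! j)"
proof (induction es arbitrary: cs)
  case (Cons e es)
  then obtain c cs' where "cs = c # cs'" by (cases cs) auto
  with Cons show ?case by (simp add: sum.lessThan_Suc_shift del: sum.lessThan_Suc)
qed simp

lemma fcomb_map: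
  assumes add: "\<And>x y. \<psi> (x + y) = \<psi> x + \<psi> y" and hom: "\<And>c x. c \<in> K \<Longrightarrow> \<psi> (c * x) = c * \<psi> x"
  shows "set cs \<subseteq> K \<Longrightarrow> length cs = length es \<Longrightarrow> \<psi> (fcomb cs es) = fcomb cs (map \<psi> es)"
proof (induction es arbitrary: cs)
  case Nil
  have "\<psi> 0 + \<psi> 0 = \<psi> 0 + 0" using add[of 0 0] by simp
  then have "\<psi> 0 = 0" by (simp only: add_left_cancel)
  then show ?case by (cases cs) simp_all
next
  case (Cons e es)
  then obtain c cs' where "cs = c # cs'" by (cases cs) auto
  with Cons show ?case by (simp add: add hom)
qed

lemma subfield_diff: "subfield K \<Longrightarrow> x \<in> K \<Longrightarrow> y \<in> K \<Longrightarrow> x - y \<in> K"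
  unfolding subfield_def by (metis diff_conv_add_uminus)

lemma set_map2_closed:
  assumes "\<And>x y. x \<in> K \<Longrightarrow> y \<in> K \<Longrightarrow> f x y \<in> K"
  shows "set cs \<subseteq> K \<Longrightarrow> set ds \<subseteq> K \<Longrightarrow> set (map2 f cs ds) \<subseteq> K"
proof (induction cs arbitrary: ds)
  case (Cons c cs) then show ?case using assms by (cases ds) auto
qed simp

lemma fcomb_inj:
  assumes K: "subfield K" and ind: "indep_over K es"
    and cs: "length cs = length es" "set cs \<subseteq> K"
    and ds: "length ds = length es" "set ds \<subseteq> K"
    and eq: "fcomb cs es = fcomb ds es"
  shows "cs = ds"
proof -
  have "fcomb (map2 (-) cs ds) es = 0" using fcomb_diff[OF cs(1) ds(1)] eq by simp
  moreover have "set (map2 (-) cs ds) \<subseteq> K"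
    by (rule set_map2_closed[OF _ cs(2) ds(2)]) (use subfield_diff[OF K] in auto)
  moreover have "length (map2 (-) cs ds) = length es" using cs ds by simp
  ultimately have z: "set (map2 (-) cs ds) \<subseteq> {0}" using ind unfolding indep_over_def by blast
  show ?thesis
  proof (rule nth_equalityI)
    show "length cs = length ds" using cs ds by simp
    fix i assume i: "i < length cs"
    then have "map2 (-) cs ds ! i \<in> set (map2 (-) cs ds)" using cs ds by (intro nth_mem) simp
    with z i cs ds show "cs ! i = ds ! i" by auto
  qed
qed

lemma card_span_over:
  assumes K: "subfield K" "finite K" and ind: "indep_over K es"
  shows "card (span_over K es) = card K ^ length es"
proof -
  have "span_over K es = (\<lambda>cs. fcomb cs es) ` {cs. set cs \<subseteq> K \<and> length cs = length es}"
    unfolding span_over_def by auto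
  moreover have "inj_on (\<lambda>cs. fcomb cs es) {cs. set cs \<subseteq> K \<and> length cs = length es}"
    by (rule inj_onI) (use fcomb_inj[OF K(1) ind] in auto)
  ultimately show ?thesis by (simp add: card_image card_lists_length_eq[OF K(2)])
qed

lemma indep_over_Cons:
  assumes K: "subfield K" and ind: "indep_over K es" and y: "y \<notin> span_over K es"
  shows "indep_over K (y # es)"
  unfolding indep_over_def
proof (intro allI impI)
  fix cs assume a: "length cs = length (y # es) \<and> set cs \<subseteq> K \<and> fcomb cs (y # es) = 0"
  then obtain c cs' where cs: "cs = c # cs'" by (cases cs) auto
  with a have c: "c \<in> K" and cs': "set cs' \<subseteq> K" "length cs' = length es"
    and e: "c * y + fcomb cs' es = 0" by auto
  have "c = 0"
  proof (rule ccontr)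
    assume c0: "c \<noteq> 0"
    let ?ds = "map ((*) (- inverse c)) cs'"
    have "y = (- inverse c) * fcomb cs' es"
      using e c0 by (simp add: field_simps eq_neg_iff_add_eq_0)
    then have "y = fcomb ?ds es" by (simp add: fcomb_scale)
    moreover have "set ?ds \<subseteq> K" using cs' c K unfolding subfield_def by auto
    ultimately have "y \<in> span_over K es" unfolding span_over_def using cs' by force
    with y show False by simp
  qed
  with e ind cs' have "set cs' \<subseteq> {0}" unfolding indep_over_def by simp
  with \<open>c = 0\<close> cs show "set cs \<subseteq> {0}" by auto
qed

text \<open>In a finite field, an independent family has at most \<open>|F|\<close> members, since its span
  has \<open>|K|^k \<ge> 2^k > k\<close> elements.\<close>

lemma indep_over_length_bound:
  assumes fin: "finite (UNIV :: 'a::field set)" and K: "subfield (K :: 'a set)"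
    and ind: "indep_over K es"
  shows "length es \<le> card (UNIV :: 'a set)"
proof -
  have finK: "finite K" using fin by (rule finite_subset[rotated]) simp
  have "card {0, 1::'a} \<le> card K" using K finK unfolding subfield_def by (intro card_mono) auto
  then have "2 ^ length es \<le> card K ^ length es" by (intro power_mono) auto
  also have "\<dots> = card (span_over K es)" using card_span_over[OF K finK ind] by simp
  also have "\<dots> \<le> card (UNIV :: 'a set)" by (rule card_mono[OF fin]) simp
  finally show ?thesis using less_exp[of "length es"] by linarith
qed

text \<open>A maximal independent family is a basis.\<close>

lemma basis_over_exists:
  assumes fin: "finite (UNIV :: 'a::field set)" and K: "subfield (K :: 'a set)"
  shows "\<exists>es. indep_over K es \<and> span_over K es = UNIV"
proof -
  let ?P = "\<lambda>k. \<exists>es. length es = k \<and> indep_over K es"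
  have "?P 0" unfolding indep_over_def by auto
  then obtain k where k: "?P k" "\<And>k'. ?P k' \<Longrightarrow> k' \<le> k"
    using Nat.ex_has_greatest_nat[of ?P 0 "card (UNIV :: 'a set)"]
      indep_over_length_bound[OF fin K] by metis
  then obtain es where es: "length es = k" "indep_over K es" by blast
  have "span_over K es = UNIV"
  proof (rule ccontr)
    assume "span_over K es \<noteq> UNIV"
    then obtain y where "y \<notin> span_over K es" by blast
    from indep_over_Cons[OF K es(2) this] have "?P (Suc k)"
      using es by (intro exI[of _ "y # es"]) simp
    then show False using k(2) by fastforce
  qed
  with es show ?thesis by blast
qed

section \<open>Finite fields\<close>

text \<open>Every element of a finite field F satisfies \<open>x^|F| = x\<close>: multiplication by a nonzero
  \<open>x\<close> permutes the nonzero elements, so \<open>x^(|F|-1)\<close> times their product equals their product.\<close>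

lemma power_card_same:
  fixes x :: "'a :: {finite, field}"
  shows "x ^ card (UNIV :: 'a set) = x"
proof (cases "x = 0")
  case True
  then show ?thesis using finite_UNIV_card_ge_0[where ?'a = 'a] by simp
next
  case False
  let ?U = "UNIV - {0 :: 'a}"
  have "x ^ card ?U * \<Prod>?U = (\<Prod>y\<in>?U. x * y)" by (simp add: prod.distrib)
  also have "\<dots> = \<Prod>?U"
    by (rule prod.reindex_bij_witness[of _ "\<lambda>y. y / x" "\<lambda>y. x * y"]) (use False in auto)
  finally have unit: "x ^ card ?U = 1" by simp
  have "card (UNIV :: 'a set) = Suc (card ?U)"
    using card_Suc_Diff1[of UNIV "0::'a"] by simp
  then have "x ^ card (UNIV :: 'a set) = x * x ^ card ?U" by (simp only: power_Suc)
  with unit show ?thesis by simp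
qed

text \<open>The polynomial \<open>X^m - X\<close> has at most \<open>m\<close> roots.\<close>

lemma card_power_fixed_le:
  assumes m: "m \<ge> 2"
  shows "card {x :: 'a :: field. x ^ m = x} \<le> m"
proof -
  define P :: "'a poly" where "P = monom 1 m - monom 1 1"
  have "coeff P m = 1" unfolding P_def using m by simp
  then have P0: "P \<noteq> 0" by auto
  have "degree P \<le> m" unfolding P_def
    by (rule order.trans[OF degree_diff_le_max]) (use m in \<open>simp add: degree_monom_eq\<close>)
  moreover have "{x :: 'a. x ^ m = x} = {x. poly P x = 0}"
    unfolding P_def by (simp add: poly_monom)
  ultimately show ?thesis using card_poly_roots_bound[OF P0] by simp
qed

lemma prime_CHAR_finite: "prime CHAR('a :: {finite, field})"
  by (rule prime_CHAR_semidom[OF finite_imp_CHAR_pos[OF finite_UNIV]])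

text \<open>Raising to a power of the characteristic is additive (Frobenius), hence the fixed points
  \<open>Kf m = {x. x^m = x}\<close> of such a power form a subfield.\<close>

lemma CHAR_power_add:
  fixes x y :: "'a :: {finite, field}"
  assumes "m = CHAR('a) ^ j"
  shows "(x + y) ^ m = x ^ m + y ^ m"
  by (rule freshmans_dream'[OF prime_CHAR_finite assms])

lemma CHAR_power_neg:
  fixes x :: "'a :: {finite, field}"
  assumes m: "m = CHAR('a) ^ j"
  shows "(- x) ^ m = - (x ^ m)"
proof -
  have "m > 0" using m prime_CHAR_finite[where 'a='a] prime_gt_0_nat by simp
  have "(- x) ^ m + x ^ m = (- x + x) ^ m" by (rule CHAR_power_add[OF m, symmetric])
  also have "\<dots> = 0" using \<open>m > 0\<close> by simp
  finally show ?thesis by (simp add: eq_neg_iff_add_eq_0)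
qed

lemma subfield_Kf_CHAR_power:
  assumes m: "m = CHAR('a :: {finite, field}) ^ j"
  shows "subfield (Kf m :: 'a set)"
proof -
  have "(0::'a) ^ m = 0" using m prime_CHAR_finite[where 'a='a] prime_gt_0_nat by simp
  moreover have "(x + y) ^ m = x ^ m + y ^ m" "(- x) ^ m = - (x ^ m)" for x y :: 'a
    using CHAR_power_add[OF m] CHAR_power_neg[OF m] by blast+
  ultimately show ?thesis
    unfolding subfield_def Kf_def by (auto simp: power_mult_distrib power_inverse)
qed

text \<open>The prime field: the multiples of 1 are fixed by \<open>x \<mapsto> x^p\<close>, and there are \<open>p\<close> of them,
  so \<open>Kf p\<close> has exactly \<open>p = CHAR(F)\<close> elements and \<open>|F|\<close> is a power of \<open>p\<close>.\<close>

lemma inj_on_of_nat_CHAR: "inj_on (of_nat :: nat \<Rightarrow> 'a :: {finite, field}) {..<CHAR('a)}"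
proof (rule linorder_inj_onI)
  fix a b assume ab: "a < b" "b \<in> {..<CHAR('a)}"
  show "(of_nat a :: 'a) \<noteq> of_nat b"
  proof
    assume "(of_nat a :: 'a) = of_nat b"
    then have "CHAR('a) dvd (b - a)" using of_nat_eq_iff_char_dvd[OF ab(1), where ?'a='a] by simp
    with ab show False by (auto dest: dvd_imp_le)
  qed
qed auto

lemma of_nat_in_Kf_CHAR: "(of_nat k :: 'a :: {finite, field}) \<in> Kf CHAR('a)"
proof (induction k)
  case (Suc k)
  have "(1 + of_nat k :: 'a) ^ CHAR('a) = 1 + of_nat k ^ CHAR('a)"
    using CHAR_power_add[of "CHAR('a)" 1 "1::'a" "of_nat k"] by simp
  with Suc show ?case unfolding Kf_def by simp
qed (simp add: Kf_def prime_gt_0_nat[OF prime_CHAR_finite])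

lemma card_Kf_CHAR: "card (Kf CHAR('a) :: 'a :: {finite, field} set) = CHAR('a)"
proof (rule antisym)
  have p2: "CHAR('a) \<ge> 2" using prime_CHAR_finite[where 'a='a] prime_ge_2_nat by blast
  show "card (Kf CHAR('a) :: 'a set) \<le> CHAR('a)"
    unfolding Kf_def by (rule card_power_fixed_le[OF p2])
  have "CHAR('a) = card (of_nat ` {..<CHAR('a)} :: 'a set)"
    using card_image[OF inj_on_of_nat_CHAR[where 'a='a]] by simp
  also have "\<dots> \<le> card (Kf CHAR('a) :: 'a set)"
    using of_nat_in_Kf_CHAR by (intro card_mono) auto
  finally show "CHAR('a) \<le> card (Kf CHAR('a) :: 'a set)" .
qed

lemma card_CHAR_power: "\<exists>m. card (UNIV :: 'a :: {finite, field} set) = CHAR('a) ^ m"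
proof -
  let ?P = "Kf CHAR('a) :: 'a set"
  have P: "subfield ?P" by (rule subfield_Kf_CHAR_power[of _ 1]) simp
  obtain es where es: "indep_over ?P es" "span_over ?P es = UNIV"
    using basis_over_exists[OF finite_UNIV P] by blast
  have "card (UNIV :: 'a set) = card ?P ^ length es"
    using card_span_over[OF P finite_subset[OF subset_UNIV finite_UNIV] es(1)] es(2) by simp
  then show ?thesis by (intro exI[of _ "length es"]) (simp add: card_Kf_CHAR)
qed

section \<open>The field \<open>F_{q^n}\<close> over \<open>F_q\<close>\<close>

text \<open>An additive map on a finite group has at most \<open>|range| \<cdot> |kernel|\<close> arguments
  (each argument is a fixed preimage of its value plus an element of the kernel).\<close>

lemma card_le_range_times_kernel:
  fixes h :: "'a :: {finite, ab_group_add} \<Rightarrow> 'b :: ab_group_add"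
  assumes hdiff: "\<And>x y. h (x - y) = h x - h y"
  shows "card (UNIV :: 'a set) \<le> card (range h) * card {x. h x = 0}"
proof -
  define s where "s z = (SOME x. h x = z)" for z
  have hs: "h (s (h x)) = h x" for x unfolding s_def using someI[of "\<lambda>y. h y = h x" x] by simp
  have "UNIV \<subseteq> (\<lambda>(z, k). s z + k) ` (range h \<times> {x. h x = 0})"
  proof
    fix x :: 'a
    have "h (x - s (h x)) = 0" using hdiff hs by simp
    then have "(h x, x - s (h x)) \<in> range h \<times> {x. h x = 0}" by simp
    then show "x \<in> (\<lambda>(z, k). s z + k) ` (range h \<times> {x. h x = 0})"
      by (rule rev_image_eqI) simp
  qed
  then have "card (UNIV :: 'a set) \<le> card ((\<lambda>(z, k). s z + k) ` (range h \<times> {x. h x = 0}))"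
    by (intro card_mono) auto
  also have "\<dots> \<le> card (range h \<times> {x. h x = 0})" by (rule card_image_le) simp
  finally show ?thesis by (simp add: card_cartesian_product)
qed

locale qn_field =
  fixes q n :: nat and ty :: "'a :: {finite, field} itself"
  assumes n2: "n \<ge> 2" and q2: "q \<ge> 2" and cardF: "card (UNIV :: 'a set) = q ^ n"
begin

abbreviation Fq :: "'a set" where "Fq \<equiv> Kf q"

abbreviation Tr :: "'a \<Rightarrow> 'a" where "Tr \<equiv> tr q n"

text \<open>Since \<open>q\<close> divides \<open>|F| = CHAR(F)^m\<close>, every power of \<open>q\<close> is a power of the characteristic.\<close>

lemma q_power_CHAR_power: "\<exists>j. q ^ i = CHAR('a) ^ j"
proof -
  obtain m where m: "card (UNIV :: 'a set) = CHAR('a) ^ m" using card_CHAR_power by blast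
  have "q dvd q ^ n" using n2 by (simp add: dvd_power)
  then have "q dvd CHAR('a) ^ m" using m cardF by simp
  then obtain j where "q = CHAR('a) ^ j"
    using divides_primepow_nat[OF prime_CHAR_finite[where 'a='a]] by blast
  then show ?thesis by (intro exI[of _ "j * i"]) (simp add: power_mult)
qed

lemma frob_add: "(x + y :: 'a) ^ (q ^ i) = x ^ (q ^ i) + y ^ (q ^ i)"
  using q_power_CHAR_power[of i] CHAR_power_add by blast

lemma frob_neg: "(- x :: 'a) ^ (q ^ i) = - (x ^ (q ^ i))"
  using q_power_CHAR_power[of i] CHAR_power_neg by blast

lemma frob_diff: "(x - y :: 'a) ^ (q ^ i) = x ^ (q ^ i) - y ^ (q ^ i)"
  using frob_add[of x "- y" i] frob_neg[of y i] by simp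

lemma frob_sum: "(\<Sum>k\<in>A. f k :: 'a) ^ (q ^ i) = (\<Sum>k\<in>A. f k ^ (q ^ i))"
proof -
  obtain j where "q ^ i = CHAR('a) ^ j" using q_power_CHAR_power by blast
  then show ?thesis by (simp add: freshmans_dream_sum'[OF prime_CHAR_finite])
qed

lemma pow_qn: "(x :: 'a) ^ (q ^ n) = x"
  using power_card_same[of x] cardF by simp

lemma subfield_Kf: "subfield Fq"
  using q_power_CHAR_power[of 1] subfield_Kf_CHAR_power by auto

lemma Kf_pow: "c \<in> Fq \<Longrightarrow> (c :: 'a) ^ (q ^ i) = c"
proof (induction i)
  case (Suc i)
  have "c ^ (q ^ Suc i) = (c ^ (q ^ i)) ^ q" by (simp add: power_mult[symmetric] mult.commute)
  then show ?case using Suc by (simp add: Kf_def)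
qed simp

lemma tr_add: "Tr (x + y) = Tr x + Tr y"
  unfolding tr_def by (simp add: frob_add sum.distrib)

lemma tr_diff: "Tr (x - y) = Tr x - Tr y"
  unfolding tr_def by (simp add: frob_diff sum_subtractf)

lemma tr_zero: "Tr 0 = 0"
  using tr_diff[of 0 0] by simp

lemma tr_Kmult: "c \<in> Fq \<Longrightarrow> Tr (c * x) = c * Tr x"
  unfolding tr_def by (simp add: power_mult_distrib Kf_pow sum_distrib_left)

text \<open>Raising the trace to the \<open>q\<close>-th power only shifts its summands cyclically.\<close>

lemma tr_pow_q: "Tr x ^ q = Tr x"
proof -
  have "Tr x ^ q = (\<Sum>i<n. (x ^ (q ^ i)) ^ (q ^ 1))"
    unfolding tr_def using frob_sum[of "\<lambda>i. x ^ (q ^ i)" "{..<n}" 1] by simp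
  also have "\<dots> = (\<Sum>i<n. x ^ (q ^ Suc i))"
    by (simp add: power_mult[symmetric] mult.commute)
  also have "\<dots> = Tr x"
  proof -
    have "(\<Sum>i<Suc n. x ^ (q ^ i)) = x ^ (q ^ 0) + (\<Sum>i<n. x ^ (q ^ Suc i))"
      by (rule sum.lessThan_Suc_shift)
    then show ?thesis unfolding tr_def using pow_qn[of x] by simp
  qed
  finally show ?thesis .
qed

lemma tr_in_Fq: "Tr x \<in> Fq"
  using tr_pow_q unfolding Kf_def by simp

lemma tr_frob: "Tr (x ^ q) = Tr x"
proof -
  have "Tr (x ^ q) = (\<Sum>i<n. (x ^ (q ^ i)) ^ (q ^ 1))"
    unfolding tr_def by (simp add: power_mult[symmetric] mult.commute)
  also have "\<dots> = Tr x ^ q"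
    unfolding tr_def using frob_sum[of "\<lambda>i. x ^ (q ^ i)" "{..<n}" 1] by simp
  finally show ?thesis using tr_pow_q by simp
qed

text \<open>The trace is a polynomial function of degree \<open>q^(n-1) < |F|\<close>, so it is not identically
  zero and the trace form \<open>(a, x) \<mapsto> Tr(a*x)\<close> is nondegenerate.\<close>

lemma card_tr_zero: "card {x. Tr x = 0} \<le> q ^ (n - 1)"
proof -
  define P :: "'a poly" where "P = (\<Sum>i<n. monom 1 (q ^ i))"
  have "coeff P (q ^ (n - 1)) = (\<Sum>i<n. if i = n - 1 then 1 else 0)"
    unfolding P_def using q2 by (simp add: coeff_sum)
  also have "\<dots> = 1" using n2 by (simp add: sum.delta)
  finally have "P \<noteq> 0" by auto
  moreover have "degree P \<le> q ^ (n - 1)"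
    unfolding P_def using q2 by (intro degree_sum_le order.trans[OF degree_monom_le]) auto
  moreover have "poly P x = Tr x" for x unfolding P_def tr_def by (simp add: poly_sum poly_monom)
  ultimately show ?thesis using card_poly_roots_bound[of P] by simp
qed

lemma qn_gt: "q ^ (n - 1) < q ^ n"
  using q2 n2 by (intro power_strict_increasing) auto

lemma tr_nonzero: "\<exists>x. Tr x \<noteq> 0"
proof (rule ccontr)
  assume "\<not> ?thesis"
  then have "{x. Tr x = 0} = UNIV" by auto
  then show False using card_tr_zero cardF qn_gt by simp
qed

lemma tr_nondeg: "(\<And>x. Tr (m * x) = 0) \<Longrightarrow> m = 0"
proof (rule ccontr)
  assume h: "\<And>x. Tr (m * x) = 0" and m: "m \<noteq> 0"
  obtain x where x: "Tr x \<noteq> 0" using tr_nonzero by blast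
  have "Tr (m * (inverse m * x)) = 0" by (rule h)
  then show False using m x by (simp add: mult.assoc[symmetric])
qed

lemma tr_form_inj: "(\<And>x. Tr (a * x) = Tr (b * x)) \<Longrightarrow> a = b"
  using tr_nondeg[of "a - b"] by (simp add: algebra_simps tr_diff)

text \<open>\<open>|Fq| \<ge> q\<close>: the additive map \<open>x \<mapsto> x^q - x\<close> has kernel \<open>Fq\<close> and takes values in
  the kernel of the trace, which has at most \<open>q^(n-1)\<close> elements.\<close>

lemma card_Kf: "card Fq = q"
proof (rule antisym)
  show "card Fq \<le> q" unfolding Kf_def by (rule card_power_fixed_le[OF q2])
  define h :: "'a \<Rightarrow> 'a" where "h x = x ^ q - x" for x
  have "range h \<subseteq> {x. Tr x = 0}" unfolding h_def by (auto simp: tr_diff tr_frob)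
  then have range_h: "card (range h) \<le> q ^ (n - 1)"
    using card_mono[OF finite_subset[OF subset_UNIV finite_UNIV]] card_tr_zero le_trans by blast
  have ker_h: "{x. h x = 0} = Fq" unfolding h_def Kf_def by simp
  have "q ^ (n - 1) * q = card (UNIV :: 'a set)"
    using cardF n2 by (simp add: power_Suc2[symmetric])
  also have "\<dots> \<le> card (range h) * card {x. h x = 0}"
    by (rule card_le_range_times_kernel) (use frob_diff[of _ _ 1] in \<open>simp add: h_def\<close>)
  also have "\<dots> = card (range h) * card Fq" by (simp only: ker_h)
  also have "\<dots> \<le> q ^ (n - 1) * card Fq" using range_h by simp
  finally show "q \<le> card Fq" using q2 by simp
qed

lemma basis_length_n: "\<exists>es. length es = n \<and> indep_over Fq es \<and> span_over Fq es = UNIV"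
proof -
  obtain es where es: "indep_over Fq es" "span_over Fq es = UNIV"
    using basis_over_exists[OF finite_UNIV subfield_Kf] by auto
  have "card (UNIV :: 'a set) = q ^ length es"
    using card_span_over[OF subfield_Kf finite_subset[OF subset_UNIV finite_UNIV] es(1)] es(2) card_Kf
    by simp
  then have "length es = n" using cardF q2 by simp
  with es show ?thesis by blast
qed

definition fbasis :: "'a list" where
  "fbasis = (SOME es. length es = n \<and> indep_over Fq es \<and> span_over Fq es = UNIV)"

lemma fbasis: "length fbasis = n" "indep_over Fq fbasis" "span_over Fq fbasis = UNIV"
  using someI_ex[OF basis_length_n] unfolding fbasis_def by auto

lemma fbasis_repr: "\<exists>cs. length cs = n \<and> set cs \<subseteq> Fq \<and> fcomb cs fbasis = y"
proof -
  have "y \<in> span_over Fq fbasis" using fbasis(3) by simp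
  then show ?thesis unfolding span_over_def using fbasis(1) by auto
qed

text \<open>\<open>Kfun\<close> is the set of \<open>F_q\<close>-linear maps \<open>F \<rightarrow> F_q\<close>; they are exactly the trace
  functionals \<open>x \<mapsto> Tr(m*x)\<close>: these are \<open>q^n\<close> distinct elements of \<open>Kfun\<close>, while a
  functional is determined by its \<open>n\<close> values on the basis, so \<open>|Kfun| \<le> q^n\<close>.\<close>

definition Kfun :: "('a \<Rightarrow> 'a) set" where
  "Kfun = {\<psi>. (\<forall>x y. \<psi> (x + y) = \<psi> x + \<psi> y) \<and> (\<forall>c\<in>Fq. \<forall>x. \<psi> (c * x) = c * \<psi> x) \<and>
              (\<forall>x. \<psi> x \<in> Fq)}"

lemma tr_functional_Kfun: "(\<lambda>x. Tr (m * x)) \<in> Kfun"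
  unfolding Kfun_def by (auto simp: distrib_left tr_add tr_in_Fq mult.left_commute tr_Kmult)

lemma card_Kfun_le: "card Kfun \<le> q ^ n"
proof -
  let ?L = "{xs. set xs \<subseteq> Fq \<and> length xs = n}"
  have "inj_on (\<lambda>\<psi>. map \<psi> fbasis) Kfun"
  proof (rule inj_onI)
    fix \<psi>1 \<psi>2 assume a: "\<psi>1 \<in> Kfun" "\<psi>2 \<in> Kfun" "map \<psi>1 fbasis = map \<psi>2 fbasis"
    show "\<psi>1 = \<psi>2"
    proof
      fix y
      obtain cs where cs: "length cs = n" "set cs \<subseteq> Fq" "fcomb cs fbasis = y"
        using fbasis_repr by blast
      have "\<psi>1 y = fcomb cs (map \<psi>1 fbasis)"
        using fcomb_map[of \<psi>1 Fq cs fbasis] a(1) cs fbasis(1) unfolding Kfun_def by auto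
      also have "\<dots> = fcomb cs (map \<psi>2 fbasis)" by (simp only: a(3))
      also have "\<dots> = \<psi>2 y"
        using fcomb_map[of \<psi>2 Fq cs fbasis] a(2) cs fbasis(1) unfolding Kfun_def by auto
      finally show "\<psi>1 y = \<psi>2 y" .
    qed
  qed
  then have "card Kfun = card ((\<lambda>\<psi>. map \<psi> fbasis) ` Kfun)" by (simp add: card_image)
  also have "\<dots> \<le> card ?L"
    using fbasis(1) unfolding Kfun_def
    by (intro card_mono finite_lists_length_eq finite_subset[OF subset_UNIV finite_UNIV]) auto
  also have "\<dots> = q ^ n" using card_lists_length_eq[of Fq n] card_Kf by simp
  finally show ?thesis .
qed

lemma Kfun_tr_repr: "\<psi> \<in> Kfun \<Longrightarrow> \<exists>m. \<psi> = (\<lambda>x. Tr (m * x))"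
proof -
  assume psi: "\<psi> \<in> Kfun"
  let ?T = "\<lambda>m. (\<lambda>x. Tr (m * x))"
  have "inj ?T" by (rule injI) (metis tr_form_inj)
  then have "card (range ?T) = q ^ n" using card_image cardF by metis
  moreover have sub: "range ?T \<subseteq> Kfun" using tr_functional_Kfun by auto
  ultimately have "range ?T = Kfun"
    using card_seteq[OF finite_subset[OF subset_UNIV finite_UNIV] sub] card_Kfun_le by simp
  then show ?thesis using psi by auto
qed

definition coords :: "'a \<Rightarrow> 'a list" where
  "coords y = (SOME cs. length cs = n \<and> set cs \<subseteq> Fq \<and> fcomb cs fbasis = y)"

lemma coords: "length (coords y) = n" "set (coords y) \<subseteq> Fq" "fcomb (coords y) fbasis = y"
  using someI_ex[OF fbasis_repr[of y]] unfolding coords_def by auto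

lemma coords_unique:
  "length cs = n \<Longrightarrow> set cs \<subseteq> Fq \<Longrightarrow> fcomb cs fbasis = y \<Longrightarrow> coords y = cs"
  using fcomb_inj[OF subfield_Kf fbasis(2), of "coords y" cs] coords fbasis(1) by simp

lemma coords_add: "coords (x + y) = map2 (+) (coords x) (coords y)"
proof (rule coords_unique)
  show "length (map2 (+) (coords x) (coords y)) = n" using coords by simp
  show "set (map2 (+) (coords x) (coords y)) \<subseteq> Fq"
    by (rule set_map2_closed[OF _ coords(2) coords(2)]) (use subfield_Kf in \<open>auto simp: subfield_def\<close>)
  show "fcomb (map2 (+) (coords x) (coords y)) fbasis = x + y"
    using fcomb_add[of "coords x" fbasis "coords y"] coords fbasis(1) by simp
qed

lemma coords_scale: "c \<in> Fq \<Longrightarrow> coords (c * y) = map ((*) c) (coords y)"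
proof (rule coords_unique)
  assume c: "c \<in> Fq"
  show "length (map ((*) c) (coords y)) = n" using coords by simp
  show "set (map ((*) c) (coords y)) \<subseteq> Fq" using coords(2) c subfield_Kf by (auto simp: subfield_def)
  show "fcomb (map ((*) c) (coords y)) fbasis = c * y"
    using fcomb_scale[of c "coords y" fbasis] coords(3)[of y] by simp
qed

definition coord :: "nat \<Rightarrow> 'a \<Rightarrow> 'a" where "coord j y = coords y ! j"

lemma coord_Kfun: "j < n \<Longrightarrow> coord j \<in> Kfun"
  unfolding Kfun_def coord_def mem_Collect_eq
proof (intro conjI allI ballI)
  assume j: "j < n"
  fix x y show "coords (x + y) ! j = coords x ! j + coords y ! j"
    using j coords(1) by (simp add: coords_add)
next
  assume j: "j < n"
  fix c x assume "c \<in> Fq" then show "coords (c * x) ! j = c * coords x ! j"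
    using j coords(1) by (simp add: coords_scale)
next
  assume j: "j < n"
  fix x show "coords x ! j \<in> Fq"
    using j coords(1)[of x] by (intro subsetD[OF coords(2)[of x]] nth_mem) simp
qed

lemma coord_sum: "y = (\<Sum>j<n. coord j y * fbasis ! j)"
  using fcomb_sum[of "coords y" fbasis] coords fbasis(1) unfolding coord_def by simp

end

section \<open>Points of \<open>P\<close>, \<open>F_{q^n}\<close>-structures and linear bijections of \<open>E\<close>\<close>

type_synonym 'a mp = "'a \<Rightarrow> 'a"

lemma one_Kf: "1 \<in> Kf q" unfolding Kf_def by simp

lemma Kf_mult: "c \<in> Kf q \<Longrightarrow> d \<in> Kf q \<Longrightarrow> c * d \<in> Kf q"
  unfolding Kf_def by (simp add: power_mult_distrib)

lemma kscal_Emaps: "\<phi> \<in> Emaps q \<Longrightarrow> c \<in> Kf q \<Longrightarrow> kscal c \<phi> \<in> Emaps q"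
  unfolding Emaps_def kscal_def by (auto simp: distrib_left mult.left_commute)

lemma fadd_Emaps: "\<phi> \<in> Emaps q \<Longrightarrow> \<psi> \<in> Emaps q \<Longrightarrow> fadd \<phi> \<psi> \<in> Emaps q"
  unfolding Emaps_def fadd_def by (auto simp: distrib_left algebra_simps)

lemma fzero_Emaps: "fzero \<in> Emaps q"
  unfolding Emaps_def fzero_def by auto

lemma kscal_one: "kscal 1 \<phi> = \<phi>" unfolding kscal_def by simp

lemma kscal_kscal: "kscal c (kscal d \<phi>) = kscal (c * d) \<phi>" unfolding kscal_def by (simp add: mult.assoc)

lemma pt_self: "\<phi> \<in> pt q \<phi>"
  unfolding pt_def using one_Kf kscal_one by (metis (mono_tags, lifting) mem_Collect_eq one_neq_zero)

lemma pt_eq: "pt q \<phi> = pt q \<psi> \<Longrightarrow> \<exists>c. c \<in> Kf q \<and> c \<noteq> 0 \<and> \<psi> = kscal c \<phi>"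
proof -
  assume "pt q \<phi> = pt q \<psi>"
  then have "\<psi> \<in> pt q \<phi>" using pt_self[of \<psi> q] by simp
  then show ?thesis unfolding pt_def by auto
qed

lemma pt_kscal: "c \<in> Kf q \<Longrightarrow> c \<noteq> 0 \<Longrightarrow> pt q (kscal c \<phi>) = pt q \<phi>"
proof -
  assume c: "c \<in> Kf q" "c \<noteq> 0"
  have ic: "inverse c \<in> Kf q" using c unfolding Kf_def by (simp add: power_inverse)
  show ?thesis unfolding pt_def
  proof (intro equalityI subsetI)
    fix x assume "x \<in> {kscal d (kscal c \<phi>) |d. d \<in> Kf q \<and> d \<noteq> 0}"
    then obtain d where "x = kscal (d * c) \<phi>" "d \<in> Kf q" "d \<noteq> 0" by (auto simp: kscal_kscal)
    then show "x \<in> {kscal d \<phi> |d. d \<in> Kf q \<and> d \<noteq> 0}" using c Kf_mult by fastforce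
  next
    fix x assume "x \<in> {kscal d \<phi> |d. d \<in> Kf q \<and> d \<noteq> 0}"
    then obtain d where d: "x = kscal d \<phi>" "d \<in> Kf q" "d \<noteq> 0" by auto
    then have "x = kscal (d * inverse c) (kscal c \<phi>)" using c by (simp add: kscal_kscal mult.assoc)
    then show "x \<in> {kscal d (kscal c \<phi>) |d. d \<in> Kf q \<and> d \<noteq> 0}" using d ic c Kf_mult by fastforce
  qed
qed

lemma klin_img_pt:
  assumes "klin_bij q f" "\<phi> \<in> Emaps q"
  shows "f ` pt q \<phi> = pt q (f \<phi>)"
proof -
  have "f (kscal c \<phi>) = kscal c (f \<phi>)" if "c \<in> Kf q" for c
    using assms that unfolding klin_bij_def by blast
  then show ?thesis unfolding pt_def by (auto simp: image_def)
qed

lemma pt_subset: "\<phi> \<in> Emaps q \<Longrightarrow> pt q \<phi> \<subseteq> Emaps q"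
  unfolding pt_def using kscal_Emaps by blast

lemma fstructD:
  assumes "fstruct q sm"
  shows "\<And>a \<phi>. \<phi> \<in> Emaps q \<Longrightarrow> sm a \<phi> \<in> Emaps q"
    and "\<And>a \<phi> \<psi>. \<phi> \<in> Emaps q \<Longrightarrow> \<psi> \<in> Emaps q \<Longrightarrow> sm a (fadd \<phi> \<psi>) = fadd (sm a \<phi>) (sm a \<psi>)"
    and "\<And>a b \<phi>. \<phi> \<in> Emaps q \<Longrightarrow> sm (a + b) \<phi> = fadd (sm a \<phi>) (sm b \<phi>)"
    and "\<And>a b \<phi>. \<phi> \<in> Emaps q \<Longrightarrow> sm (a * b) \<phi> = sm a (sm b \<phi>)"
    and "\<And>\<phi>. \<phi> \<in> Emaps q \<Longrightarrow> sm 1 \<phi> = \<phi>"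
    and "\<And>c \<phi>. c \<in> Kf q \<Longrightarrow> \<phi> \<in> Emaps q \<Longrightarrow> sm c \<phi> = kscal c \<phi>"
  using assms unfolding fstruct_def by blast+

lemma Fpt_subset: "fstruct q sm \<Longrightarrow> \<phi> \<in> Emaps q \<Longrightarrow> p \<in> Fpt q sm \<phi> \<Longrightarrow> p \<subseteq> Emaps q"
  unfolding Fpt_def using pt_subset fstructD(1) by blast

lemma Fpt_scale:
  assumes sm: "fstruct q sm" and phi: "\<phi> \<in> Emaps q" and l: "l \<noteq> 0"
  shows "Fpt q sm (sm l \<phi>) = Fpt q sm \<phi>"
  unfolding Fpt_def
proof (intro equalityI subsetI)
  fix x assume "x \<in> {pt q (sm m (sm l \<phi>)) |m. m \<noteq> 0}"
  then obtain m where "x = pt q (sm (m * l) \<phi>)" "m \<noteq> 0" using fstructD(4)[OF sm phi] by auto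
  then show "x \<in> {pt q (sm m \<phi>) |m. m \<noteq> 0}" using l by auto
next
  fix x assume "x \<in> {pt q (sm m \<phi>) |m. m \<noteq> 0}"
  then obtain m where m: "x = pt q (sm m \<phi>)" "m \<noteq> 0" by auto
  then have "x = pt q (sm (m * inverse l) (sm l \<phi>))"
    using fstructD(4)[OF sm phi, of "m * inverse l" l] l by (simp add: mult.assoc)
  then show "x \<in> {pt q (sm m (sm l \<phi>)) |m. m \<noteq> 0}" using l m by auto
qed

lemma Fpt_self: "fstruct q sm \<Longrightarrow> \<phi> \<in> Emaps q \<Longrightarrow> pt q \<phi> \<in> Fpt q sm \<phi>"
  unfolding Fpt_def using fstructD(5) by (metis (mono_tags, lifting) mem_Collect_eq one_neq_zero)

lemma Fpt_eq:
  assumes sm: "fstruct q sm" and phi: "\<phi> \<in> Emaps q" and psi: "\<psi> \<in> Emaps q"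
    and eq: "Fpt q sm \<psi> = Fpt q sm \<phi>"
  shows "\<exists>l. l \<noteq> 0 \<and> \<psi> = sm l \<phi>"
proof -
  have "pt q \<psi> \<in> Fpt q sm \<phi>" using Fpt_self[OF sm psi] eq by simp
  then obtain l where l: "l \<noteq> 0" "pt q \<psi> = pt q (sm l \<phi>)" unfolding Fpt_def by auto
  then obtain c where c: "c \<in> Kf q" "c \<noteq> 0" "\<psi> = kscal c (sm l \<phi>)" using pt_eq by metis
  then have "\<psi> = sm (c * l) \<phi>"
    using fstructD(6)[OF sm c(1) fstructD(1)[OF sm phi]] fstructD(4)[OF sm phi] by simp
  moreover have "c * l \<noteq> 0" using c l by simp
  ultimately show ?thesis by blast
qed

lemma klinD:
  assumes "klin_bij q g"
  shows "bij_betw g (Emaps q) (Emaps q)"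
    and "\<And>\<phi> \<psi>. \<phi> \<in> Emaps q \<Longrightarrow> \<psi> \<in> Emaps q \<Longrightarrow> g (fadd \<phi> \<psi>) = fadd (g \<phi>) (g \<psi>)"
    and "\<And>c \<phi>. c \<in> Kf q \<Longrightarrow> \<phi> \<in> Emaps q \<Longrightarrow> g (kscal c \<phi>) = kscal c (g \<phi>)"
    and "\<And>\<phi>. \<phi> \<in> Emaps q \<Longrightarrow> g \<phi> \<in> Emaps q"
  using assms unfolding klin_bij_def bij_betw_def by blast+

lemma klin_inj: "klin_bij q g \<Longrightarrow> \<phi> \<in> Emaps q \<Longrightarrow> \<psi> \<in> Emaps q \<Longrightarrow> g \<phi> = g \<psi> \<Longrightarrow> \<phi> = \<psi>"
  using klinD(1) unfolding bij_betw_def inj_on_def by blast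

lemma klin_fzero:
  fixes g :: "'a::{finite,field} mp \<Rightarrow> 'a mp"
  assumes g: "klin_bij q g"
  shows "g fzero = fzero"
proof -
  have "fadd (g fzero) (g fzero) = g fzero"
    using klinD(2)[OF g fzero_Emaps fzero_Emaps] by (simp add: fadd_def fzero_def)
  then have "g fzero x = 0" for x by (metis fadd_def add_cancel_right_right)
  then show ?thesis unfolding fzero_def by (simp add: fun_eq_iff)
qed

lemma klin_fzero_iff:
  fixes g :: "'a::{finite,field} mp \<Rightarrow> 'a mp"
  assumes g: "klin_bij q g" and phi: "\<phi> \<in> Emaps q"
  shows "g \<phi> = fzero \<longleftrightarrow> \<phi> = fzero"
  using klin_fzero[OF g] klin_inj[OF g phi fzero_Emaps] by auto

definition inv_lin :: "nat \<Rightarrow> ('a::{finite,field} mp \<Rightarrow> 'a mp) \<Rightarrow> 'a mp \<Rightarrow> 'a mp" where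
  "inv_lin q g = inv_into (Emaps q) g"

lemma inv_lin:
  fixes g :: "'a::{finite,field} mp \<Rightarrow> 'a mp"
  assumes g: "klin_bij q g"
  shows "\<And>\<phi>. \<phi> \<in> Emaps q \<Longrightarrow> inv_lin q g \<phi> \<in> Emaps q"
    and "\<And>\<phi>. \<phi> \<in> Emaps q \<Longrightarrow> g (inv_lin q g \<phi>) = \<phi>"
    and "\<And>\<phi>. \<phi> \<in> Emaps q \<Longrightarrow> inv_lin q g (g \<phi>) = \<phi>"
proof -
  have b: "bij_betw g (Emaps q) (Emaps q)" by (rule klinD(1)[OF g])
  show "\<And>\<phi>. \<phi> \<in> Emaps q \<Longrightarrow> inv_lin q g \<phi> \<in> Emaps q"
    unfolding inv_lin_def using bij_betw_inv_into[OF b] bij_betwE by blast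
  show "\<And>\<phi>. \<phi> \<in> Emaps q \<Longrightarrow> g (inv_lin q g \<phi>) = \<phi>"
    unfolding inv_lin_def using b by (simp add: bij_betw_inv_into_right)
  show "\<And>\<phi>. \<phi> \<in> Emaps q \<Longrightarrow> inv_lin q g (g \<phi>) = \<phi>"
    unfolding inv_lin_def using b by (simp add: bij_betw_inv_into_left)
qed

lemma klin_inv_lin:
  fixes g :: "'a::{finite,field} mp \<Rightarrow> 'a mp"
  assumes g: "klin_bij q g"
  shows "klin_bij q (inv_lin q g)"
  unfolding klin_bij_def
proof (intro conjI ballI)
  show "bij_betw (inv_lin q g) (Emaps q) (Emaps q)"
    unfolding inv_lin_def by (rule bij_betw_inv_into[OF klinD(1)[OF g]])
next
  fix \<phi> \<psi> :: "'a \<Rightarrow> 'a" assume a: "\<phi> \<in> Emaps q" "\<psi> \<in> Emaps q"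
  have "g (fadd (inv_lin q g \<phi>) (inv_lin q g \<psi>)) = fadd \<phi> \<psi>"
    using klinD(2)[OF g inv_lin(1)[OF g a(1)] inv_lin(1)[OF g a(2)]] inv_lin(2)[OF g] a by simp
  then show "inv_lin q g (fadd \<phi> \<psi>) = fadd (inv_lin q g \<phi>) (inv_lin q g \<psi>)"
    using inv_lin(3)[OF g fadd_Emaps[OF inv_lin(1)[OF g a(1)] inv_lin(1)[OF g a(2)]]] by simp
next
  fix c :: 'a and \<phi> :: "'a \<Rightarrow> 'a" assume a: "c \<in> Kf q" "\<phi> \<in> Emaps q"
  have "g (kscal c (inv_lin q g \<phi>)) = kscal c \<phi>"
    using klinD(3)[OF g a(1) inv_lin(1)[OF g a(2)]] inv_lin(2)[OF g a(2)] by simp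
  then show "inv_lin q g (kscal c \<phi>) = kscal c (inv_lin q g \<phi>)"
    using inv_lin(3)[OF g kscal_Emaps[OF inv_lin(1)[OF g a(2)] a(1)]] by simp
qed

lemma klin_comp:
  fixes g f :: "'a::{finite,field} mp \<Rightarrow> 'a mp"
  assumes f: "klin_bij q f" and g: "klin_bij q g"
  shows "klin_bij q (\<lambda>\<phi>. g (f \<phi>))"
  unfolding klin_bij_def
proof (intro conjI ballI)
  show "bij_betw (\<lambda>\<phi>. g (f \<phi>)) (Emaps q) (Emaps q)"
    using bij_betw_trans[OF klinD(1)[OF f] klinD(1)[OF g]] by (simp add: comp_def)
next
  fix \<phi> \<psi> :: "'a \<Rightarrow> 'a" assume a: "\<phi> \<in> Emaps q" "\<psi> \<in> Emaps q"
  then show "g (f (fadd \<phi> \<psi>)) = fadd (g (f \<phi>)) (g (f \<psi>))"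
    using klinD(2)[OF f a] klinD(2)[OF g klinD(4)[OF f a(1)] klinD(4)[OF f a(2)]] by simp
next
  fix c :: 'a and \<phi> :: "'a \<Rightarrow> 'a" assume a: "c \<in> Kf q" "\<phi> \<in> Emaps q"
  then show "g (f (kscal c \<phi>)) = kscal c (g (f \<phi>))"
    using klinD(3)[OF f a] klinD(3)[OF g a(1) klinD(4)[OF f a(2)]] by simp
qed

lemma simg_eq_image: "simg g D = (\<lambda>S. (\<lambda>p. g ` p) ` S) ` D"
  unfolding simg_def pimg_def ..

lemma simg_memI: "S \<in> D \<Longrightarrow> pimg g S \<in> simg g D"
  unfolding simg_def by (rule imageI)

lemma pimg_comp: "pimg g (pimg f S) = pimg (\<lambda>x. g (f x)) S"
  unfolding pimg_def by (auto simp: image_image)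

lemma pimg_cong:
  assumes S: "S \<subseteq> Pow A" and e: "\<And>x. x \<in> A \<Longrightarrow> f x = f' x"
  shows "pimg f S = pimg f' S"
  unfolding pimg_def
proof (rule image_cong[OF refl])
  fix p assume "p \<in> S"
  then have p: "p \<subseteq> A" using S by blast
  show "f ` p = f' ` p" by (rule image_cong[OF refl]) (use p e in blast)
qed

lemma pimg_id: "S \<subseteq> Pow A \<Longrightarrow> (\<And>x. x \<in> A \<Longrightarrow> f x = x) \<Longrightarrow> pimg f S = S"
  using pimg_cong[of S A f "\<lambda>x. x"] unfolding pimg_def by simp

lemma pimg_Pow: "S \<subseteq> Pow (Emaps q) \<Longrightarrow> (\<And>x. x \<in> Emaps q \<Longrightarrow> f x \<in> Emaps q) \<Longrightarrow> pimg f S \<subseteq> Pow (Emaps q)"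
  unfolding pimg_def by auto

lemma pimg_inv_lin:
  fixes g :: "'a::{finite,field} mp \<Rightarrow> 'a mp"
  assumes g: "klin_bij q g" and S: "S \<subseteq> Pow (Emaps q)"
  shows "pimg (inv_lin q g) (pimg g S) = S"
  unfolding pimg_comp by (rule pimg_id[OF S]) (rule inv_lin(3)[OF g])

lemma pimg_inj:
  fixes g :: "'a::{finite,field} mp \<Rightarrow> 'a mp"
  assumes g: "klin_bij q g" and S: "S \<subseteq> Pow (Emaps q)" "S' \<subseteq> Pow (Emaps q)"
    and eq: "pimg g S = pimg g S'"
  shows "S = S'"
proof -
  have "S = pimg (inv_lin q g) (pimg g S)" using pimg_inv_lin[OF g S(1)] by simp
  also have "\<dots> = pimg (inv_lin q g) (pimg g S')" by (simp only: eq)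
  also have "\<dots> = S'" using pimg_inv_lin[OF g S(2)] by simp
  finally show ?thesis .
qed

section \<open>Transport along linear bijections\<close>

text \<open>Every notion occurring in the theorem is invariant under an \<open>F_q\<close>-linear bijection \<open>g\<close> of
  \<open>E\<close>: \<open>g\<close> carries an \<open>F_{q^n}\<close>-structure \<open>sm\<close> to \<open>struct_along q g sm\<close>, its spread to the
  image spread, a collineation \<open>f\<close> to its conjugate \<open>g f g^-1\<close>, and a subgeometry to its image.\<close>

definition struct_along :: "nat \<Rightarrow> ('a::{finite,field} mp \<Rightarrow> 'a mp) \<Rightarrow>
    ('a \<Rightarrow> 'a mp \<Rightarrow> 'a mp) \<Rightarrow> 'a \<Rightarrow> 'a mp \<Rightarrow> 'a mp" where
  "struct_along q g sm a \<phi> = g (sm a (inv_lin q g \<phi>))"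

lemma fstruct_along:
  fixes g :: "'a::{finite,field} mp \<Rightarrow> 'a mp"
  assumes g: "klin_bij q g" and sm: "fstruct q sm"
  shows "fstruct q (struct_along q g sm)"
proof -
  note gi = inv_lin[OF g] and gil = klin_inv_lin[OF g]
  note S = fstructD[OF sm]
  show ?thesis unfolding fstruct_def struct_along_def
  proof (intro conjI allI ballI)
    fix a and \<phi> :: "'a mp" assume p: "\<phi> \<in> Emaps q"
    show "g (sm a (inv_lin q g \<phi>)) \<in> Emaps q" using klinD(4)[OF g S(1)[OF gi(1)[OF p]]] .
  next
    fix a and \<phi> \<psi> :: "'a mp" assume p: "\<phi> \<in> Emaps q" "\<psi> \<in> Emaps q"
    show "g (sm a (inv_lin q g (fadd \<phi> \<psi>))) = fadd (g (sm a (inv_lin q g \<phi>))) (g (sm a (inv_lin q g \<psi>)))"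
      using klinD(2)[OF gil p] S(2)[OF gi(1)[OF p(1)] gi(1)[OF p(2)]]
        klinD(2)[OF g S(1)[OF gi(1)[OF p(1)]] S(1)[OF gi(1)[OF p(2)]]] by simp
  next
    fix a b and \<phi> :: "'a mp" assume p: "\<phi> \<in> Emaps q"
    show "g (sm (a + b) (inv_lin q g \<phi>)) = fadd (g (sm a (inv_lin q g \<phi>))) (g (sm b (inv_lin q g \<phi>)))"
      using S(3)[OF gi(1)[OF p]] klinD(2)[OF g S(1)[OF gi(1)[OF p]] S(1)[OF gi(1)[OF p]]] by simp
  next
    fix a b and \<phi> :: "'a mp" assume p: "\<phi> \<in> Emaps q"
    show "g (sm (a * b) (inv_lin q g \<phi>)) = g (sm a (inv_lin q g (g (sm b (inv_lin q g \<phi>)))))"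
      using S(4)[OF gi(1)[OF p]] gi(3)[OF S(1)[OF gi(1)[OF p]]] by simp
  next
    fix \<phi> :: "'a mp" assume p: "\<phi> \<in> Emaps q"
    show "g (sm 1 (inv_lin q g \<phi>)) = \<phi>" using S(5)[OF gi(1)[OF p]] gi(2)[OF p] by simp
  next
    fix c :: 'a and \<phi> :: "'a mp" assume p: "c \<in> Kf q" "\<phi> \<in> Emaps q"
    show "g (sm c (inv_lin q g \<phi>)) = kscal c \<phi>"
      using S(6)[OF p(1) gi(1)[OF p(2)]] klinD(3)[OF g p(1) gi(1)[OF p(2)]] gi(2)[OF p(2)] by simp
  qed
qed

lemma Fpt_along:
  fixes g :: "'a::{finite,field} mp \<Rightarrow> 'a mp"
  assumes g: "klin_bij q g" and sm: "fstruct q sm" and p: "\<phi> \<in> Emaps q"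
  shows "Fpt q (struct_along q g sm) (g \<phi>) = pimg g (Fpt q sm \<phi>)"
proof -
  have "pt q (struct_along q g sm l (g \<phi>)) = g ` pt q (sm l \<phi>)" for l
    unfolding struct_along_def using inv_lin(3)[OF g p] klin_img_pt[OF g fstructD(1)[OF sm p]] by simp
  then show ?thesis unfolding Fpt_def pimg_def by auto
qed

lemma Fpt_Pow: "fstruct q sm \<Longrightarrow> \<phi> \<in> Emaps q \<Longrightarrow> Fpt q sm \<phi> \<subseteq> Pow (Emaps q)"
  using Fpt_subset by blast

lemma spread_Pow: "fstruct q sm \<Longrightarrow> spread_of q sm \<subseteq> Pow (Pow (Emaps q))"
  unfolding spread_of_def using Fpt_Pow by blast

lemma spread_along:
  fixes g :: "'a::{finite,field} mp \<Rightarrow> 'a mp"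
  assumes g: "klin_bij q g" and sm: "fstruct q sm"
  shows "spread_of q (struct_along q g sm) = simg g (spread_of q sm)"
proof (intro equalityI subsetI)
  fix S assume "S \<in> spread_of q (struct_along q g sm)"
  then obtain \<psi> where psi: "S = Fpt q (struct_along q g sm) \<psi>" "\<psi> \<in> Emaps q" "\<psi> \<noteq> fzero"
    unfolding spread_of_def by blast
  let ?\<phi> = "inv_lin q g \<psi>"
  have ph: "?\<phi> \<in> Emaps q" "g ?\<phi> = \<psi>" using inv_lin[OF g] psi(2) by auto
  have "?\<phi> \<noteq> fzero" using ph psi(3) klin_fzero[OF g] by auto
  moreover have "S = pimg g (Fpt q sm ?\<phi>)" using Fpt_along[OF g sm ph(1)] ph(2) psi(1) by simp
  ultimately show "S \<in> simg g (spread_of q sm)" unfolding simg_def spread_of_def using ph(1) by blast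
next
  fix S assume "S \<in> simg g (spread_of q sm)"
  then obtain \<phi> where phi: "S = pimg g (Fpt q sm \<phi>)" "\<phi> \<in> Emaps q" "\<phi> \<noteq> fzero"
    unfolding simg_def spread_of_def by blast
  have "g \<phi> \<noteq> fzero" using klin_fzero_iff[OF g phi(2)] phi(3) by simp
  moreover have "S = Fpt q (struct_along q g sm) (g \<phi>)" using Fpt_along[OF g sm phi(2)] phi(1) by simp
  ultimately show "S \<in> spread_of q (struct_along q g sm)" unfolding spread_of_def
    using klinD(4)[OF g phi(2)] by blast
qed

lemma desarg_spread_along:
  fixes g :: "'a::{finite,field} mp \<Rightarrow> 'a mp"
  assumes g: "klin_bij q g" and D: "desarg_spread q D"
  shows "desarg_spread q (simg g D)"
  using D fstruct_along[OF g] spread_along[OF g] unfolding desarg_spread_def by metis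

lemma lincomb_kscal_Emaps:
  "set cs \<subseteq> Kf q \<Longrightarrow> set ws \<subseteq> Emaps q \<Longrightarrow> lincomb kscal cs ws \<in> Emaps q"
proof (induction ws arbitrary: cs)
  case Nil then show ?case by (cases cs) (simp_all add: fzero_Emaps)
next
  case (Cons w ws) then show ?case
    by (cases cs) (simp_all add: fzero_Emaps fadd_Emaps kscal_Emaps)
qed

lemma lincomb_sm_Emaps:
  "fstruct q sm \<Longrightarrow> set vs \<subseteq> Emaps q \<Longrightarrow> lincomb sm cs vs \<in> Emaps q"
proof (induction vs arbitrary: cs)
  case Nil then show ?case by (cases cs) (simp_all add: fzero_Emaps)
next
  case (Cons w ws) then show ?case
    by (cases cs) (simp_all add: fzero_Emaps fadd_Emaps fstructD(1))
qed

lemma klin_lincomb_kscal: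
  fixes g :: "'a::{finite,field} mp \<Rightarrow> 'a mp"
  assumes g: "klin_bij q g"
  shows "set cs \<subseteq> Kf q \<Longrightarrow> set ws \<subseteq> Emaps q \<Longrightarrow> g (lincomb kscal cs ws) = lincomb kscal cs (map g ws)"
proof (induction ws arbitrary: cs)
  case Nil then show ?case by (cases cs) (simp_all add: klin_fzero[OF g])
next
  case (Cons w ws) then show ?case
    by (cases cs) (simp_all add: klin_fzero[OF g] klinD(2)[OF g] klinD(3)[OF g] kscal_Emaps lincomb_kscal_Emaps)
qed

lemma klin_lincomb_sm:
  fixes g :: "'a::{finite,field} mp \<Rightarrow> 'a mp"
  assumes g: "klin_bij q g" and sm: "fstruct q sm"
  shows "set vs \<subseteq> Emaps q \<Longrightarrow> g (lincomb sm cs vs) = lincomb (struct_along q g sm) cs (map g vs)"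
proof (induction vs arbitrary: cs)
  case Nil then show ?case by (cases cs) (simp_all add: klin_fzero[OF g])
next
  case (Cons w ws)
  show ?case
  proof (cases cs)
    case Nil then show ?thesis by (simp add: klin_fzero[OF g])
  next
    case (Cons c cs')
    have w: "w \<in> Emaps q" "set ws \<subseteq> Emaps q" using Cons.prems by auto
    have "g (lincomb sm cs (w # ws)) = fadd (g (sm c w)) (g (lincomb sm cs' ws))"
      unfolding Cons by (simp add: klinD(2)[OF g fstructD(1)[OF sm w(1)] lincomb_sm_Emaps[OF sm w(2)]])
    also have "g (sm c w) = struct_along q g sm c (g w)"
      unfolding struct_along_def using inv_lin(3)[OF g w(1)] by simp
    also have "g (lincomb sm cs' ws) = lincomb (struct_along q g sm) cs' (map g ws)"
      using Cons.IH w(2) by simp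
    finally show ?thesis unfolding Cons by simp
  qed
qed

lemma Kspan_along:
  fixes g :: "'a::{finite,field} mp \<Rightarrow> 'a mp"
  assumes g: "klin_bij q g" and ws: "set ws \<subseteq> Emaps q"
  shows "Kspan q (map g ws) = g ` Kspan q ws"
proof (intro equalityI subsetI)
  fix x assume "x \<in> Kspan q (map g ws)"
  then obtain cs where cs: "x = lincomb kscal cs (map g ws)" "length cs = length ws" "set cs \<subseteq> Kf q"
    unfolding Kspan_def by auto
  then have "x = g (lincomb kscal cs ws)" using klin_lincomb_kscal[OF g _ ws] by simp
  moreover have "lincomb kscal cs ws \<in> Kspan q ws" unfolding Kspan_def using cs by blast
  ultimately show "x \<in> g ` Kspan q ws" by blast
next
  fix x assume "x \<in> g ` Kspan q ws"
  then obtain cs where cs: "x = g (lincomb kscal cs ws)" "length cs = length ws" "set cs \<subseteq> Kf q"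
    unfolding Kspan_def by auto
  then have "x = lincomb kscal cs (map g ws)" using klin_lincomb_kscal[OF g _ ws] by simp
  then show "x \<in> Kspan q (map g ws)" unfolding Kspan_def using cs by auto
qed

lemma Kspan_Emaps: "set ws \<subseteq> Emaps q \<Longrightarrow> Kspan q ws \<subseteq> Emaps q"
  unfolding Kspan_def using lincomb_kscal_Emaps by blast

lemma Kindep_along:
  fixes g :: "'a::{finite,field} mp \<Rightarrow> 'a mp"
  assumes g: "klin_bij q g" and ws: "set ws \<subseteq> Emaps q" and ind: "Kindep q ws"
  shows "Kindep q (map g ws)"
  unfolding Kindep_def
proof (intro allI impI)
  fix cs assume a: "length cs = length (map g ws) \<and> set cs \<subseteq> Kf q \<and> lincomb kscal cs (map g ws) = fzero"
  then have "g (lincomb kscal cs ws) = fzero" using klin_lincomb_kscal[OF g _ ws] by simp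
  then have "lincomb kscal cs ws = fzero"
    using klin_fzero_iff[OF g lincomb_kscal_Emaps[OF _ ws]] a by blast
  then show "set cs \<subseteq> {0}" using ind a unfolding Kindep_def by simp
qed

lemma Fspans_along:
  fixes g :: "'a::{finite,field} mp \<Rightarrow> 'a mp"
  assumes g: "klin_bij q g" and sm: "fstruct q sm" and W: "W \<subseteq> Emaps q"
    and span: "Fspans sm W (Emaps q)"
  shows "Fspans (struct_along q g sm) (g ` W) (Emaps q)"
  unfolding Fspans_def
proof
  fix \<phi> :: "'a mp" assume p: "\<phi> \<in> Emaps q"
  obtain cs vs where cv: "length cs = length vs" "set vs \<subseteq> W" "inv_lin q g \<phi> = lincomb sm cs vs"
    using span inv_lin(1)[OF g p] unfolding Fspans_def by blast
  have "\<phi> = g (lincomb sm cs vs)" using cv(3) inv_lin(2)[OF g p] by simp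
  also have "\<dots> = lincomb (struct_along q g sm) cs (map g vs)"
    using klin_lincomb_sm[OF g sm] cv(2) W by blast
  finally show "\<exists>cs vs. length cs = length vs \<and> set vs \<subseteq> g ` W \<and>
      \<phi> = lincomb (struct_along q g sm) cs vs"
    using cv by (intro exI[of _ cs] exI[of _ "map g vs"]) auto
qed

lemma simg_Fpt_set_along:
  fixes g :: "'a::{finite,field} mp \<Rightarrow> 'a mp"
  assumes g: "klin_bij q g" and sm: "fstruct q sm" and W: "W \<subseteq> Emaps q"
  shows "simg g {Fpt q sm w | w. w \<in> W \<and> w \<noteq> fzero} =
    {Fpt q (struct_along q g sm) w | w. w \<in> g ` W \<and> w \<noteq> fzero}"
proof -
  have "pimg g (Fpt q sm w) = Fpt q (struct_along q g sm) (g w)" "g w = fzero \<longleftrightarrow> w = fzero"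
    if "w \<in> W" for w
    using Fpt_along[OF g sm] klin_fzero_iff[OF g] that W by auto
  then show ?thesis unfolding simg_def by blast
qed

lemma subgeometry_along:
  fixes g :: "'a::{finite,field} mp \<Rightarrow> 'a mp"
  assumes g: "klin_bij q g" and sm: "fstruct q sm" and sg: "subgeometry q n sm R"
  shows "subgeometry q n (struct_along q g sm) (simg g R)"
proof -
  obtain ws where ws: "length ws = n" "set ws \<subseteq> Emaps q" "Kindep q ws"
    "Fspans sm (Kspan q ws) (Emaps q)" "R = {Fpt q sm w | w. w \<in> Kspan q ws \<and> w \<noteq> fzero}"
    using sg unfolding subgeometry_def by blast
  have KS: "Kspan q (map g ws) = g ` Kspan q ws" by (rule Kspan_along[OF g ws(2)])
  have KE: "Kspan q ws \<subseteq> Emaps q" by (rule Kspan_Emaps[OF ws(2)])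
  show ?thesis unfolding subgeometry_def
  proof (intro exI conjI)
    show "length (map g ws) = n" "set (map g ws) \<subseteq> Emaps q"
      using ws(1,2) klinD(4)[OF g] by auto
    show "Kindep q (map g ws)" by (rule Kindep_along[OF g ws(2,3)])
    show "Fspans (struct_along q g sm) (Kspan q (map g ws)) (Emaps q)"
      unfolding KS by (rule Fspans_along[OF g sm KE ws(4)])
    show "simg g R = {Fpt q (struct_along q g sm) w | w. w \<in> Kspan q (map g ws) \<and> w \<noteq> fzero}"
      unfolding KS ws(5) by (rule simg_Fpt_set_along[OF g sm KE])
  qed
qed

definition conjugate :: "nat \<Rightarrow> ('a::{finite,field} mp \<Rightarrow> 'a mp) \<Rightarrow> ('a mp \<Rightarrow> 'a mp) \<Rightarrow> 'a mp \<Rightarrow> 'a mp" where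
  "conjugate q g f \<phi> = g (f (inv_lin q g \<phi>))"

lemma klin_conjugate:
  fixes g f :: "'a::{finite,field} mp \<Rightarrow> 'a mp"
  assumes g: "klin_bij q g" and f: "klin_bij q f"
  shows "klin_bij q (conjugate q g f)"
  unfolding conjugate_def using klin_comp[OF klin_comp[OF klin_inv_lin[OF g] f] g] by simp

lemma pimg_conjugate:
  fixes g f :: "'a::{finite,field} mp \<Rightarrow> 'a mp"
  assumes g: "klin_bij q g" and S: "S \<subseteq> Pow (Emaps q)"
  shows "pimg (conjugate q g f) (pimg g S) = pimg g (pimg f S)"
  unfolding pimg_comp conjugate_def by (rule pimg_cong[OF S]) (simp add: inv_lin(3)[OF g])

lemma pimg_conjugate_pow:
  fixes g f :: "'a::{finite,field} mp \<Rightarrow> 'a mp"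
  assumes g: "klin_bij q g" and f: "klin_bij q f" and S: "S \<subseteq> Pow (Emaps q)"
  shows "(pimg (conjugate q g f) ^^ k) (pimg g S) = pimg g ((pimg f ^^ k) S) \<and> (pimg f ^^ k) S \<subseteq> Pow (Emaps q)"
proof (induction k)
  case 0 then show ?case using S by simp
next
  case (Suc k)
  then show ?case
    using pimg_conjugate[OF g, of "(pimg f ^^ k) S" f] pimg_Pow[of "(pimg f ^^ k) S" q f] klinD(4)[OF f]
    by simp
qed

lemma simg_conjugate:
  fixes g f :: "'a::{finite,field} mp \<Rightarrow> 'a mp"
  assumes g: "klin_bij q g" and D: "D \<subseteq> Pow (Pow (Emaps q))"
  shows "simg (conjugate q g f) (simg g D) = simg g (simg f D)"
  unfolding simg_def image_image using pimg_conjugate[OF g] D by (intro image_cong) auto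

lemma conjugate_pow_fixed_iff:
  fixes g f :: "'a::{finite,field} mp \<Rightarrow> 'a mp"
  assumes g: "klin_bij q g" and f: "klin_bij q f" and S: "S \<subseteq> Pow (Emaps q)"
  shows "(pimg (conjugate q g f) ^^ k) (pimg g S) = pimg g S \<longleftrightarrow> (pimg f ^^ k) S = S"
  using pimg_conjugate_pow[OF g f S, of k] pimg_inj[OF g _ S] by auto

lemma additive_bij_conjugate:
  fixes g h :: "'a::{finite,field} mp \<Rightarrow> 'a mp"
  assumes g: "klin_bij q g" and h: "bij_betw h (Emaps q) (Emaps q)"
  shows "bij_betw (\<lambda>\<psi>. g (h (inv_lin q g \<psi>))) (Emaps q) (Emaps q)"
    and "\<forall>\<phi>\<in>Emaps q. \<forall>\<psi>\<in>Emaps q. h (fadd \<phi> \<psi>) = fadd (h \<phi>) (h \<psi>) \<Longrightarrow>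
      \<forall>\<phi>\<in>Emaps q. \<forall>\<psi>\<in>Emaps q. g (h (inv_lin q g (fadd \<phi> \<psi>))) =
        fadd (g (h (inv_lin q g \<phi>))) (g (h (inv_lin q g \<psi>)))"
proof -
  note gi = inv_lin[OF g]
  have hE: "h \<phi> \<in> Emaps q" if "\<phi> \<in> Emaps q" for \<phi> using h that bij_betwE by blast
  show "bij_betw (\<lambda>\<psi>. g (h (inv_lin q g \<psi>))) (Emaps q) (Emaps q)"
    using bij_betw_trans[OF bij_betw_trans[OF klinD(1)[OF klin_inv_lin[OF g]] h] klinD(1)[OF g]]
    by (simp add: comp_def)
  assume add: "\<forall>\<phi>\<in>Emaps q. \<forall>\<psi>\<in>Emaps q. h (fadd \<phi> \<psi>) = fadd (h \<phi>) (h \<psi>)"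
  show "\<forall>\<phi>\<in>Emaps q. \<forall>\<psi>\<in>Emaps q. g (h (inv_lin q g (fadd \<phi> \<psi>))) =
      fadd (g (h (inv_lin q g \<phi>))) (g (h (inv_lin q g \<psi>)))"
  proof (intro ballI)
    fix \<phi> \<psi> :: "'a mp" assume p: "\<phi> \<in> Emaps q" "\<psi> \<in> Emaps q"
    show "g (h (inv_lin q g (fadd \<phi> \<psi>))) = fadd (g (h (inv_lin q g \<phi>))) (g (h (inv_lin q g \<psi>)))"
      using klinD(2)[OF klin_inv_lin[OF g] p] add gi(1)[OF p(1)] gi(1)[OF p(2)]
        klinD(2)[OF g hE[OF gi(1)[OF p(1)]] hE[OF gi(1)[OF p(2)]]] by simp
  qed
qed

lemma induced_along:
  fixes g f :: "'a::{finite,field} mp \<Rightarrow> 'a mp"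
  assumes g: "klin_bij q g" and sm: "fstruct q sm" and ind: "induced_semilinear q sm f"
  shows "induced_semilinear q (struct_along q g sm) (conjugate q g f)"
proof -
  obtain \<sigma> h where h: "field_aut \<sigma>" "bij_betw h (Emaps q) (Emaps q)"
      "\<forall>\<phi>\<in>Emaps q. \<forall>\<psi>\<in>Emaps q. h (fadd \<phi> \<psi>) = fadd (h \<phi>) (h \<psi>)"
      "\<forall>l. \<forall>\<phi>\<in>Emaps q. h (sm l \<phi>) = sm (\<sigma> l) (h \<phi>)"
      "\<forall>\<phi>\<in>Emaps q. \<phi> \<noteq> fzero \<longrightarrow> pimg f (Fpt q sm \<phi>) = Fpt q sm (h \<phi>)"
    using ind unfolding induced_semilinear_def by blast
  note gi = inv_lin[OF g]
  have hE: "h \<phi> \<in> Emaps q" if "\<phi> \<in> Emaps q" for \<phi> using h(2) that bij_betwE by blast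
  let ?h = "\<lambda>\<psi>. g (h (inv_lin q g \<psi>))"
  have "bij_betw ?h (Emaps q) (Emaps q)" "\<forall>\<phi>\<in>Emaps q. \<forall>\<psi>\<in>Emaps q. ?h (fadd \<phi> \<psi>) = fadd (?h \<phi>) (?h \<psi>)"
    using additive_bij_conjugate[OF g h(2)] h(3) by blast+
  moreover have "\<forall>l. \<forall>\<phi>\<in>Emaps q. ?h (struct_along q g sm l \<phi>) = struct_along q g sm (\<sigma> l) (?h \<phi>)"
  proof (intro allI ballI)
    fix l and \<phi> :: "'a mp" assume p: "\<phi> \<in> Emaps q"
    show "?h (struct_along q g sm l \<phi>) = struct_along q g sm (\<sigma> l) (?h \<phi>)"
      unfolding struct_along_def
      using gi(3)[OF fstructD(1)[OF sm gi(1)[OF p]]] gi(3)[OF hE[OF gi(1)[OF p]]] h(4) gi(1)[OF p] by simp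
  qed
  moreover have "\<forall>\<psi>\<in>Emaps q. \<psi> \<noteq> fzero \<longrightarrow>
      pimg (conjugate q g f) (Fpt q (struct_along q g sm) \<psi>) = Fpt q (struct_along q g sm) (?h \<psi>)"
  proof (intro ballI impI)
    fix \<psi> :: "'a mp" assume p: "\<psi> \<in> Emaps q" "\<psi> \<noteq> fzero"
    let ?\<phi> = "inv_lin q g \<psi>"
    have ph: "?\<phi> \<in> Emaps q" "?\<phi> \<noteq> fzero" using gi(1)[OF p(1)] gi(2)[OF p(1)] p(2) klin_fzero[OF g] by auto
    have "Fpt q (struct_along q g sm) \<psi> = pimg g (Fpt q sm ?\<phi>)"
      using Fpt_along[OF g sm ph(1)] gi(2)[OF p(1)] by simp
    then have "pimg (conjugate q g f) (Fpt q (struct_along q g sm) \<psi>) = pimg g (pimg f (Fpt q sm ?\<phi>))"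
      using pimg_conjugate[OF g Fpt_Pow[OF sm ph(1)]] by simp
    also have "\<dots> = pimg g (Fpt q sm (h ?\<phi>))" using h(5) ph by simp
    also have "\<dots> = Fpt q (struct_along q g sm) (?h \<psi>)" using Fpt_along[OF g sm hE[OF ph(1)]] by simp
    finally show "pimg (conjugate q g f) (Fpt q (struct_along q g sm) \<psi>) = Fpt q (struct_along q g sm) (?h \<psi>)" .
  qed
  ultimately show ?thesis unfolding induced_semilinear_def using h(1) by blast
qed

text \<open>Condition (D2) is invariant: the witnessing collineation is conjugated by \<open>g\<close>.\<close>

lemma cond_D2_along:
  fixes g :: "'a::{finite,field} mp \<Rightarrow> 'a mp"
  assumes g: "klin_bij q g" and c: "cond_D2 q n D R"
  shows "cond_D2 q n (simg g D) (simg g R)"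
proof -
  obtain sm f where sm: "fstruct q sm" and D: "D = spread_of q sm" and f: "klin_bij q f"
    and fD: "simg f D = D" and ind: "induced_semilinear q sm f"
    and pn: "\<forall>S\<in>D. (pimg f ^^ n) S = S"
    and pk: "\<forall>k. 0 < k \<and> k < n \<longrightarrow> (\<exists>S\<in>D. (pimg f ^^ k) S \<noteq> S)"
    and fixR: "{S \<in> D. pimg f S = S} = R" and sg: "subgeometry q n sm R"
    using c unfolding cond_D2_def by blast
  have DP': "D \<subseteq> Pow (Pow (Emaps q))" using spread_Pow[OF sm] D by simp
  then have DP: "S \<subseteq> Pow (Emaps q)" if "S \<in> D" for S using that by blast
  let ?f = "conjugate q g f"
  have fix_iff: "(pimg ?f ^^ k) (pimg g S) = pimg g S \<longleftrightarrow> (pimg f ^^ k) S = S" if "S \<in> D" for S k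
    by (rule conjugate_pow_fixed_iff[OF g f DP[OF that]])
  have fixes_D: "simg ?f (simg g D) = simg g D" using simg_conjugate[OF g DP'] fD by simp
  have image_D: "S' \<in> simg g D \<longleftrightarrow> (\<exists>S\<in>D. S' = pimg g S)" for S'
    unfolding simg_def by blast
  have fixed_R: "{S \<in> simg g D. pimg ?f S = S} = simg g R"
  proof -
    have "{S \<in> simg g D. pimg ?f S = S} = pimg g ` {S \<in> D. pimg f S = S}"
      using fix_iff[where k = 1] unfolding simg_def by auto
    then show ?thesis using fixR unfolding simg_def by simp
  qed
  show ?thesis unfolding cond_D2_def
  proof (intro exI conjI)
    show "fstruct q (struct_along q g sm)" by (rule fstruct_along[OF g sm])
    show "simg g D = spread_of q (struct_along q g sm)" using spread_along[OF g sm] D by simp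
    show "klin_bij q ?f" by (rule klin_conjugate[OF g f])
    show "simg ?f (simg g D) = simg g D" by (rule fixes_D)
    show "induced_semilinear q (struct_along q g sm) ?f" by (rule induced_along[OF g sm ind])
    show "\<forall>S\<in>simg g D. (pimg ?f ^^ n) S = S" using pn fix_iff image_D by metis
    show "\<forall>k. 0 < k \<and> k < n \<longrightarrow> (\<exists>S\<in>simg g D. (pimg ?f ^^ k) S \<noteq> S)"
      using pk fix_iff image_D by metis
    show "{S \<in> simg g D. pimg ?f S = S} = simg g R" by (rule fixed_R)
    show "subgeometry q n (struct_along q g sm) (simg g R)" by (rule subgeometry_along[OF g sm sg])
  qed
qed

definition D_spreads :: "nat \<Rightarrow> nat \<Rightarrow> 'a::{finite,field} mp set set \<Rightarrow>
    'a mp set set set \<Rightarrow> 'a mp set set set \<Rightarrow> bool" where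
  "D_spreads q n X D1 D2 \<longleftrightarrow> desarg_spread q D1 \<and> desarg_spread q D2 \<and>
     X \<in> D1 \<and> X \<in> D2 \<and> R1 q n \<subseteq> D1 \<and> R2 q n \<subseteq> D2 \<and>
     cond_D2 q n D1 (R1 q n) \<and> cond_D2 q n D2 (R2 q n)"

lemma D_spreads_along:
  fixes f :: "'a::{finite,field} mp \<Rightarrow> 'a mp"
  assumes f: "klin_bij q f" "simg f (R1 q n) = R1 q n" "simg f (R2 q n) = R2 q n"
    and D: "D_spreads q n X D1 D2"
  shows "D_spreads q n (pimg f X) (simg f D1) (simg f D2)"
proof -
  note D = D[unfolded D_spreads_def]
  show ?thesis unfolding D_spreads_def
  proof (intro conjI)
    show "desarg_spread q (simg f D1)" "desarg_spread q (simg f D2)"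
      using desarg_spread_along[OF f(1)] D by blast+
    show "pimg f X \<in> simg f D1" "pimg f X \<in> simg f D2"
      using simg_memI D by blast+
    show "R1 q n \<subseteq> simg f D1" "R2 q n \<subseteq> simg f D2"
      using image_mono[of "R1 q n" D1 "pimg f"] image_mono[of "R2 q n" D2 "pimg f"] D f(2,3)
      unfolding simg_def by simp_all
    show "cond_D2 q n (simg f D1) (R1 q n)" "cond_D2 q n (simg f D2) (R2 q n)"
      using cond_D2_along[OF f(1)] D f(2,3) by metis+
  qed
qed

section \<open>Collineations induced by linear bijections\<close>

lemma pt_inj_klin:
  fixes h :: "'a::{finite,field} mp \<Rightarrow> 'a mp"
  assumes h: "klin_bij q h" and p: "\<phi> \<in> Emaps q" "\<psi> \<in> Emaps q" and e: "pt q (h \<phi>) = pt q (h \<psi>)"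
  shows "pt q \<phi> = pt q \<psi>"
proof -
  obtain c where c: "c \<in> Kf q" "c \<noteq> 0" "h \<psi> = kscal c (h \<phi>)" using pt_eq[OF e] by blast
  then have "h \<psi> = h (kscal c \<phi>)" using klinD(3)[OF h c(1) p(1)] by simp
  then have "\<psi> = kscal c \<phi>" using klin_inj[OF h p(2) kscal_Emaps[OF p(1) c(1)]] by simp
  then show ?thesis using pt_kscal[OF c(1,2)] by simp
qed

lemma img_Points:
  fixes h :: "'a::{finite,field} mp \<Rightarrow> 'a mp"
  assumes h: "klin_bij q h"
  shows "bij_betw (\<lambda>p. h ` p) (Points q) (Points q)"
  unfolding bij_betw_def
proof
  show "inj_on (\<lambda>p. h ` p) (Points q)"
  proof (rule inj_onI)
    fix p p' :: "'a mp set" assume a: "p \<in> Points q" "p' \<in> Points q" "h ` p = h ` p'"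
    obtain \<phi> where \<phi>: "p = pt q \<phi>" "\<phi> \<in> Emaps q" using a(1) unfolding Points_def by blast
    obtain \<psi> where \<psi>: "p' = pt q \<psi>" "\<psi> \<in> Emaps q" using a(2) unfolding Points_def by blast
    have "pt q (h \<phi>) = pt q (h \<psi>)" using a(3) \<phi> \<psi> klin_img_pt[OF h] by simp
    then show "p = p'" using pt_inj_klin[OF h \<phi>(2) \<psi>(2)] \<phi> \<psi> by simp
  qed
  show "(\<lambda>p. h ` p) ` Points q = Points q"
  proof (intro equalityI subsetI)
    fix x :: "'a mp set" assume "x \<in> (\<lambda>p. h ` p) ` Points q"
    then obtain \<phi> where \<phi>: "x = h ` pt q \<phi>" "\<phi> \<in> Emaps q" "\<phi> \<noteq> fzero" unfolding Points_def by blast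
    then have "x = pt q (h \<phi>)" using klin_img_pt[OF h] by simp
    moreover have "h \<phi> \<in> Emaps q" "h \<phi> \<noteq> fzero" using klinD(4)[OF h \<phi>(2)] klin_fzero_iff[OF h \<phi>(2)] \<phi>(3) by auto
    ultimately show "x \<in> Points q" unfolding Points_def by blast
  next
    fix x :: "'a mp set" assume "x \<in> Points q"
    then obtain \<psi> where \<psi>: "x = pt q \<psi>" "\<psi> \<in> Emaps q" "\<psi> \<noteq> fzero" unfolding Points_def by blast
    let ?\<phi> = "inv_lin q h \<psi>"
    have ph: "?\<phi> \<in> Emaps q" "h ?\<phi> = \<psi>" using inv_lin[OF h] \<psi>(2) by auto
    have "?\<phi> \<noteq> fzero" using ph \<psi>(3) klin_fzero[OF h] by auto
    then have "pt q ?\<phi> \<in> Points q" unfolding Points_def using ph by blast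
    moreover have "x = h ` pt q ?\<phi>" using klin_img_pt[OF h ph(1)] ph(2) \<psi>(1) by simp
    ultimately show "x \<in> (\<lambda>p. h ` p) ` Points q" by blast
  qed
qed

lemma img_line_pt:
  fixes h :: "'a::{finite,field} mp \<Rightarrow> 'a mp"
  assumes h: "klin_bij q h" and p: "\<phi> \<in> Emaps q" "\<psi> \<in> Emaps q" and ab: "a \<in> Kf q" "b \<in> Kf q"
  shows "h ` pt q (fadd (kscal a \<phi>) (kscal b \<psi>)) = pt q (fadd (kscal a (h \<phi>)) (kscal b (h \<psi>)))"
proof -
  have E: "fadd (kscal a \<phi>) (kscal b \<psi>) \<in> Emaps q"
    by (rule fadd_Emaps[OF kscal_Emaps[OF p(1) ab(1)] kscal_Emaps[OF p(2) ab(2)]])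
  have "h (fadd (kscal a \<phi>) (kscal b \<psi>)) = fadd (kscal a (h \<phi>)) (kscal b (h \<psi>))"
    using klinD(2)[OF h kscal_Emaps[OF p(1) ab(1)] kscal_Emaps[OF p(2) ab(2)]]
      klinD(3)[OF h ab(1) p(1)] klinD(3)[OF h ab(2) p(2)] by simp
  then show ?thesis using klin_img_pt[OF h E] by simp
qed

lemma img_Lines:
  fixes h :: "'a::{finite,field} mp \<Rightarrow> 'a mp"
  assumes h: "klin_bij q h" and L: "L \<in> Lines q"
  shows "(\<lambda>p. h ` p) ` L \<in> Lines q"
proof -
  obtain \<phi> \<psi> where pp: "\<phi> \<in> Emaps q" "\<psi> \<in> Emaps q" "\<phi> \<noteq> fzero" "\<psi> \<noteq> fzero" "pt q \<phi> \<noteq> pt q \<psi>"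
    and L: "L = {pt q (fadd (kscal a \<phi>) (kscal b \<psi>)) | a b. a \<in> Kf q \<and> b \<in> Kf q \<and> (a \<noteq> 0 \<or> b \<noteq> 0)}"
    using L unfolding Lines_def by blast
  have img: "(\<lambda>p. h ` p) ` L = {pt q (fadd (kscal a (h \<phi>)) (kscal b (h \<psi>))) | a b. a \<in> Kf q \<and> b \<in> Kf q \<and> (a \<noteq> 0 \<or> b \<noteq> 0)}"
  proof (intro equalityI subsetI)
    fix x assume "x \<in> (\<lambda>p. h ` p) ` L"
    then obtain a b where ab: "a \<in> Kf q" "b \<in> Kf q" "a \<noteq> 0 \<or> b \<noteq> 0"
      "x = h ` pt q (fadd (kscal a \<phi>) (kscal b \<psi>))" unfolding L by blast
    then have "x = pt q (fadd (kscal a (h \<phi>)) (kscal b (h \<psi>)))" using img_line_pt[OF h pp(1,2)] by simp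
    then show "x \<in> {pt q (fadd (kscal a (h \<phi>)) (kscal b (h \<psi>))) | a b. a \<in> Kf q \<and> b \<in> Kf q \<and> (a \<noteq> 0 \<or> b \<noteq> 0)}"
      using ab by blast
  next
    fix x assume "x \<in> {pt q (fadd (kscal a (h \<phi>)) (kscal b (h \<psi>))) | a b. a \<in> Kf q \<and> b \<in> Kf q \<and> (a \<noteq> 0 \<or> b \<noteq> 0)}"
    then obtain a b where ab: "a \<in> Kf q" "b \<in> Kf q" "a \<noteq> 0 \<or> b \<noteq> 0"
      "x = pt q (fadd (kscal a (h \<phi>)) (kscal b (h \<psi>)))" by blast
    then have "x = h ` pt q (fadd (kscal a \<phi>) (kscal b \<psi>))" using img_line_pt[OF h pp(1,2)] by simp
    moreover have "pt q (fadd (kscal a \<phi>) (kscal b \<psi>)) \<in> L" unfolding L using ab by blast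
    ultimately show "x \<in> (\<lambda>p. h ` p) ` L" by blast
  qed
  have "h \<phi> \<in> Emaps q" "h \<psi> \<in> Emaps q" using klinD(4)[OF h] pp by auto
  moreover have "h \<phi> \<noteq> fzero" "h \<psi> \<noteq> fzero" using klin_fzero_iff[OF h] pp by auto
  moreover have "pt q (h \<phi>) \<noteq> pt q (h \<psi>)" using pt_inj_klin[OF h pp(1,2)] pp(5) by blast
  ultimately show ?thesis unfolding img Lines_def by blast
qed

lemma collineation_img:
  fixes h :: "'a::{finite,field} mp \<Rightarrow> 'a mp"
  assumes h: "klin_bij q h"
  shows "collineation q (\<lambda>p. h ` p)"
  unfolding collineation_def using img_Points[OF h] img_Lines[OF h] by blast

lemma involutory_collineation_img:
  fixes h :: "'a::{finite,field} mp \<Rightarrow> 'a mp"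
  assumes h: "klin_bij q h" and invol: "\<And>\<phi>. \<phi> \<in> Emaps q \<Longrightarrow> h (h \<phi>) = \<phi>"
    and moves: "\<phi> \<in> Emaps q" "\<phi> \<noteq> fzero" "pt q (h \<phi>) \<noteq> pt q \<phi>"
  shows "involutory_collineation q (\<lambda>p. h ` p)"
  unfolding involutory_collineation_def
proof (intro conjI ballI bexI)
  show "collineation q (\<lambda>p. h ` p)" by (rule collineation_img[OF h])
  fix x :: "'a mp set" assume "x \<in> Points q"
  then have "x \<subseteq> Emaps q" unfolding Points_def using pt_subset by blast
  then show "h ` h ` x = x" using invol by (force simp: image_image)
next
  show "pt q \<phi> \<in> Points q" unfolding Points_def using moves by blast
  show "h ` pt q \<phi> \<noteq> pt q \<phi>" using klin_img_pt[OF h moves(1)] moves(3) by simp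
qed

lemma involutory_conjugate:
  fixes f a :: "'a::{finite,field} mp \<Rightarrow> 'a mp"
  assumes f: "klin_bij q f" and a: "klin_bij q a" and invol: "\<And>\<phi>. \<phi> \<in> Emaps q \<Longrightarrow> a (a \<phi>) = \<phi>"
    and moves: "\<phi> \<in> Emaps q" "\<phi> \<noteq> fzero" "pt q (a \<phi>) \<noteq> pt q \<phi>"
  shows "involutory_collineation q (\<lambda>p. conjugate q f a ` p)"
proof -
  note fi = inv_lin[OF f]
  have on_image: "conjugate q f a (f \<phi>) = f (a \<phi>)" if "\<phi> \<in> Emaps q" for \<phi>
    unfolding conjugate_def using fi(3)[OF that] by simp
  show ?thesis
  proof (rule involutory_collineation_img)
    show "klin_bij q (conjugate q f a)" by (rule klin_conjugate[OF f a])
    fix \<psi> :: "'a mp" assume "\<psi> \<in> Emaps q"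
    then show "conjugate q f a (conjugate q f a \<psi>) = \<psi>"
      using on_image klinD(4)[OF a] fi invol unfolding conjugate_def by simp
  next
    show "f \<phi> \<in> Emaps q" "f \<phi> \<noteq> fzero"
      using klinD(4)[OF f moves(1)] klin_fzero_iff[OF f moves(1)] moves(2) by auto
    show "pt q (conjugate q f a (f \<phi>)) \<noteq> pt q (f \<phi>)"
      using on_image[OF moves(1)] pt_inj_klin[OF f klinD(4)[OF a moves(1)] moves(1)] moves(3) by auto
  qed
qed

lemma conjugate_fixes_image:
  fixes f a :: "'a::{finite,field} mp \<Rightarrow> 'a mp"
  assumes f: "klin_bij q f" and p: "p \<subseteq> Emaps q" and fixed: "a ` p = p"
  shows "conjugate q f a ` (f ` p) = f ` p"
proof -
  have "conjugate q f a ` (f ` p) = f ` (a ` p)"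
    unfolding conjugate_def image_image using inv_lin(3)[OF f] p by (intro image_cong) auto
  then show ?thesis using fixed by simp
qed

section \<open>The standard model at \<open>I\<close>\<close>

text \<open>Left multiplication \<open>a \<cdot> \<phi> = (x \<mapsto> a * \<phi> x)\<close> is an \<open>F_{q^n}\<close>-structure on \<open>E\<close>; its spread
  \<open>spread_of q lmult\<close> plays the role of \<open>D_1(I)\<close>.\<close>

definition lmult :: "'a::field \<Rightarrow> 'a mp \<Rightarrow> 'a mp" where
  "lmult a \<phi> = (\<lambda>x. a * \<phi> x)"

lemma fstruct_lmult: "fstruct q (lmult :: 'a::{finite,field} \<Rightarrow> _)"
  unfolding fstruct_def
proof (intro conjI allI ballI)
  fix a and \<phi> :: "'a mp" assume "\<phi> \<in> Emaps q"
  then show "lmult a \<phi> \<in> Emaps q" unfolding Emaps_def lmult_def by (auto simp: distrib_left mult.left_commute)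
next
  fix a and \<phi> \<psi> :: "'a mp"
  show "lmult a (fadd \<phi> \<psi>) = fadd (lmult a \<phi>) (lmult a \<psi>)"
    unfolding lmult_def fadd_def by (simp add: distrib_left)
next
  fix a b and \<phi> :: "'a mp"
  show "lmult (a + b) \<phi> = fadd (lmult a \<phi>) (lmult b \<phi>)"
    unfolding lmult_def fadd_def by (simp add: distrib_right)
next
  fix a b and \<phi> :: "'a mp"
  show "lmult (a * b) \<phi> = lmult a (lmult b \<phi>)" unfolding lmult_def by (simp add: mult.assoc)
next
  fix \<phi> :: "'a mp"
  show "lmult 1 \<phi> = \<phi>" unfolding lmult_def by simp
next
  fix c and \<phi> :: "'a mp"
  show "lmult c \<phi> = kscal c \<phi>" unfolding lmult_def kscal_def by simp
qed

lemma lincomb_lmult: "length cs = length vs \<Longrightarrow> lincomb lmult cs vs x = fcomb cs (map (\<lambda>v. v x) vs)"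
proof (induction cs arbitrary: vs)
  case Nil then show ?case by (simp add: fzero_def)
next
  case (Cons c cs)
  then obtain v vs' where v: "vs = v # vs'" by (cases vs) auto
  then show ?case using Cons by (simp add: fadd_def lmult_def)
qed

text \<open>The trace functionals \<open>x \<mapsto> Tr(m*x)\<close>; up to \<open>F_{q^n}\<close>-scalars they are the elements of \<open>R_1\<close>.\<close>

definition tr_functional :: "nat \<Rightarrow> nat \<Rightarrow> 'a::{finite,field} \<Rightarrow> 'a mp" where
  "tr_functional q n m = (\<lambda>x. tr q n (m * x))"

context qn_field
begin

abbreviation trf :: "'a \<Rightarrow> 'a mp" where "trf \<equiv> tr_functional q n"

lemma trf_Emaps: "trf m \<in> Emaps q"
  unfolding Emaps_def mem_Collect_eq tr_functional_def
  by (auto simp: distrib_left tr_add mult.left_commute tr_Kmult)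

lemma trf_eq_fzero: "trf m = fzero \<longleftrightarrow> m = 0"
proof
  assume a: "trf m = fzero"
  have "Tr (m * x) = 0" for x using fun_cong[OF a, of x] unfolding tr_functional_def fzero_def by simp
  then show "m = 0" by (rule tr_nondeg)
qed (simp add: tr_functional_def fzero_def tr_zero)

lemma trf_add: "trf (a + b) = fadd (trf a) (trf b)"
  unfolding tr_functional_def fadd_def by (simp add: distrib_right tr_add)

lemma trf_kscal: "c \<in> Fq \<Longrightarrow> kscal c (trf m) = trf (c * m)"
  unfolding tr_functional_def kscal_def by (simp add: tr_Kmult mult.assoc)

lemma Kfun_trf: "\<psi> \<in> Kfun \<Longrightarrow> \<exists>m. \<psi> = trf m"
proof -
  assume a: "\<psi> \<in> Kfun"
  obtain m where "\<psi> = (\<lambda>x. Tr (m * x))" using Kfun_tr_repr[OF a] by (elim exE)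
  then show ?thesis by (intro exI[of _ m]) (simp add: tr_functional_def)
qed

lemma id_Emaps: "(\<lambda>x::'a. x) \<in> Emaps q" unfolding Emaps_def by simp

lemma id_nonzero: "(\<lambda>x::'a. x) \<noteq> fzero"
proof
  assume "(\<lambda>x::'a. x) = fzero"
  from fun_cong[OF this, of 1] show False unfolding fzero_def by simp
qed

lemma Iset_in_std_spread: "(Iset q :: 'a mp set set) \<in> spread_of q lmult"
proof -
  have e: "(Iset q :: 'a mp set set) = Fpt q lmult (\<lambda>x. x)" unfolding Iset_def Fpt_def lmult_def by simp
  show ?thesis unfolding spread_of_def mem_Collect_eq
    by (intro exI[of _ "\<lambda>x. x"]) (simp only: e id_Emaps id_nonzero simp_thms)
qed

lemma Fpt_lmult_trf: "Fpt q lmult (trf l) = {pt q (\<lambda>x. a * tr q n (l * x)) |a. a \<noteq> 0}"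
  unfolding Fpt_def lmult_def tr_functional_def by simp

lemma R1_eq: "(R1 q n :: 'a mp set set set) = {Fpt q lmult (trf l) | l. l \<noteq> 0}"
  unfolding R1_def Fpt_lmult_trf by simp

lemma R1_sub_std_spread: "(R1 q n :: 'a mp set set set) \<subseteq> spread_of q lmult"
proof
  fix S :: "'a mp set set" assume "S \<in> R1 q n"
  then obtain l where l: "S = Fpt q lmult (trf l)" "l \<noteq> 0" unfolding R1_eq by blast
  show "S \<in> spread_of q lmult" unfolding spread_of_def mem_Collect_eq
    by (intro exI[of _ "trf l"]) (simp add: l trf_Emaps trf_eq_fzero)
qed

text \<open>The trace functionals at a basis of \<open>F\<close> are \<open>F_q\<close>-independent and their \<open>F_q\<close>-span,
  all trace functionals, spans \<open>E\<close> over \<open>F_{q^n}\<close>: writing \<open>\<phi>(x)\<close> in the basis \<open>(b_j)\<close>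
  gives \<open>\<phi> = \<Sum>_j b_j \<cdot> (coord_j \<circ> \<phi>)\<close>, and each \<open>coord_j \<circ> \<phi>\<close> is a trace functional.\<close>

lemma lincomb_trf: "set cs \<subseteq> Fq \<Longrightarrow> lincomb kscal cs (map trf es) = trf (fcomb cs es)"
proof (induction es arbitrary: cs)
  case Nil then show ?case using trf_eq_fzero[of 0] by (cases cs) simp_all
next
  case (Cons e es)
  show ?case
  proof (cases cs)
    case Nil then show ?thesis using trf_eq_fzero[of 0] by simp
  next
    case (Cons c cs')
    with Cons.prems Cons.IH show ?thesis by (simp add: trf_kscal trf_add)
  qed
qed

lemma Kspan_trf_fbasis: "Kspan q (map trf fbasis) = range trf"
proof (intro equalityI subsetI)
  fix x assume "x \<in> Kspan q (map trf fbasis)"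
  then obtain cs where "x = lincomb kscal cs (map trf fbasis)" "set cs \<subseteq> Fq" unfolding Kspan_def by auto
  then show "x \<in> range trf" using lincomb_trf by auto
next
  fix x assume "x \<in> range trf"
  then obtain m where m: "x = trf m" by auto
  obtain cs where cs: "length cs = n" "set cs \<subseteq> Fq" "fcomb cs fbasis = m" using fbasis_repr by blast
  have "x = lincomb kscal cs (map trf fbasis)" using lincomb_trf[OF cs(2)] cs m by simp
  then show "x \<in> Kspan q (map trf fbasis)" unfolding Kspan_def using cs fbasis(1) by auto
qed

lemma Kindep_trf_fbasis: "Kindep q (map trf fbasis)"
  unfolding Kindep_def
proof (intro allI impI)
  fix cs assume a: "length cs = length (map trf fbasis) \<and> set cs \<subseteq> Fq \<and>
    lincomb kscal cs (map trf fbasis) = fzero"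
  then have "trf (fcomb cs fbasis) = fzero" using lincomb_trf[of cs fbasis] by simp
  then have "fcomb cs fbasis = 0" using trf_eq_fzero by simp
  then show "set cs \<subseteq> {0}" using fbasis(2) a unfolding indep_over_def by simp
qed

lemma coord_comp_trf: "\<phi> \<in> Emaps q \<Longrightarrow> j < n \<Longrightarrow> \<exists>m. (\<lambda>x. coord j (\<phi> x)) = trf m"
  using coord_Kfun[of j] by (intro Kfun_trf) (auto simp: Kfun_def Emaps_def)

lemma Fspans_trf: "Fspans lmult (range trf) (Emaps q)"
  unfolding Fspans_def
proof
  fix \<phi> :: "'a mp" assume p: "\<phi> \<in> Emaps q"
  obtain \<nu> where nu: "\<And>j. j < n \<Longrightarrow> (\<lambda>x. coord j (\<phi> x)) = trf (\<nu> j)"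
    using coord_comp_trf[OF p] by metis
  let ?vs = "map (\<lambda>j. trf (\<nu> j)) [0..<n]"
  have "\<phi> = lincomb lmult fbasis ?vs"
  proof
    fix x
    have "lincomb lmult fbasis ?vs x = fcomb fbasis (map (\<lambda>v. v x) ?vs)"
      by (rule lincomb_lmult) (simp add: fbasis(1))
    also have "\<dots> = (\<Sum>j<n. fbasis ! j * trf (\<nu> j) x)"
      using fcomb_sum[of fbasis "map (\<lambda>v. v x) ?vs"] fbasis(1) by simp
    also have "\<dots> = (\<Sum>j<n. coord j (\<phi> x) * fbasis ! j)"
    proof (rule sum.cong[OF refl])
      fix j assume "j \<in> {..<n}"
      then have "coord j (\<phi> x) = trf (\<nu> j) x" using nu by (metis lessThan_iff)
      then show "fbasis ! j * trf (\<nu> j) x = coord j (\<phi> x) * fbasis ! j" by (simp add: mult.commute)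
    qed
    also have "\<dots> = \<phi> x" using coord_sum[of "\<phi> x"] by simp
    finally show "\<phi> x = lincomb lmult fbasis ?vs x" by simp
  qed
  then show "\<exists>cs vs. length cs = length vs \<and> set vs \<subseteq> range trf \<and> \<phi> = lincomb lmult cs vs"
    by (intro exI[of _ fbasis] exI[of _ ?vs]) (auto simp: fbasis(1))
qed

lemma subgeometry_R1: "subgeometry q n lmult (R1 q n :: 'a mp set set set)"
  unfolding subgeometry_def
proof (intro exI conjI)
  show "length (map trf fbasis) = n" using fbasis(1) by simp
  show "set (map trf fbasis) \<subseteq> Emaps q" using trf_Emaps by auto
  show "Kindep q (map trf fbasis)" by (rule Kindep_trf_fbasis)
  show "Fspans lmult (Kspan q (map trf fbasis)) (Emaps q)"
    unfolding Kspan_trf_fbasis by (rule Fspans_trf)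
  show "R1 q n = {Fpt q lmult w |w. w \<in> Kspan q (map trf fbasis) \<and> w \<noteq> fzero}"
    unfolding Kspan_trf_fbasis R1_eq using trf_eq_fzero by auto
qed

lemma q_root: "((x::'a) ^ q) ^ (q ^ (n - 1)) = x" "(x ^ (q ^ (n - 1))) ^ q = x"
proof -
  have "q * q ^ (n - 1) = q ^ n" using n2 by (simp add: power_Suc[symmetric])
  then show "(x ^ q) ^ (q ^ (n - 1)) = x" "(x ^ (q ^ (n - 1))) ^ q = x"
    by (simp_all add: power_mult[symmetric] mult.commute pow_qn)
qed

definition Frob :: "nat \<Rightarrow> 'a mp \<Rightarrow> 'a mp" where
  "Frob k \<phi> = (\<lambda>x. (\<phi> x) ^ (q ^ k))"

lemma Frob_Emaps: "\<phi> \<in> Emaps q \<Longrightarrow> Frob k \<phi> \<in> Emaps q"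
  unfolding Emaps_def mem_Collect_eq Frob_def by (auto simp: frob_add power_mult_distrib Kf_pow)

lemma Frob_Frob: "Frob a (Frob b \<phi>) = Frob (a + b) \<phi>"
  unfolding Frob_def by (simp add: power_mult[symmetric] power_add mult.commute)

lemma Frob_n: "Frob n \<phi> = \<phi>"
  unfolding Frob_def by (simp add: pow_qn)

lemma Frob_0: "Frob 0 \<phi> = \<phi>"
  unfolding Frob_def by simp

lemma Frob_fadd: "Frob k (fadd \<phi> \<psi>) = fadd (Frob k \<phi>) (Frob k \<psi>)"
  unfolding Frob_def fadd_def by (simp add: frob_add)

lemma Frob_kscal: "c \<in> Fq \<Longrightarrow> Frob k (kscal c \<phi>) = kscal c (Frob k \<phi>)"
  unfolding Frob_def kscal_def by (simp add: power_mult_distrib Kf_pow)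

lemma Frob_lmult: "Frob k (lmult l \<phi>) = lmult (l ^ (q ^ k)) (Frob k \<phi>)"
  unfolding Frob_def lmult_def by (simp add: power_mult_distrib)

lemma Frob_fzero: "Frob k fzero = fzero"
proof -
  have "q ^ k \<noteq> 0" using q2 by simp
  then have z: "(0::'a) ^ (q ^ k) = 0" by (simp add: power_0_left)
  show ?thesis unfolding Frob_def fzero_def by (simp only: z)
qed

lemma klin_Frob: "klin_bij q (Frob 1)"
  unfolding klin_bij_def
proof (intro conjI ballI)
  show "bij_betw (Frob 1) (Emaps q) (Emaps q)"
  proof (rule bij_betw_byWitness[where f' = "Frob (n - 1)"])
    show "\<forall>a\<in>Emaps q. Frob (n - 1) (Frob 1 a) = a" using n2 by (simp add: Frob_Frob Frob_n)
    show "\<forall>a\<in>Emaps q. Frob 1 (Frob (n - 1) a) = a" using n2 by (simp add: Frob_Frob Frob_n)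
    show "Frob 1 ` Emaps q \<subseteq> Emaps q" using Frob_Emaps by blast
    show "Frob (n - 1) ` Emaps q \<subseteq> Emaps q" using Frob_Emaps by blast
  qed
qed (simp_all add: Frob_fadd Frob_kscal)

lemma pimg_Frob_Fpt:
  assumes p: "\<phi> \<in> Emaps q"
  shows "pimg (Frob 1) (Fpt q lmult \<phi>) = Fpt q lmult (Frob 1 \<phi>)"
proof -
  have e: "Frob 1 ` pt q (lmult l \<phi>) = pt q (lmult (l ^ q) (Frob 1 \<phi>))" for l
    using klin_img_pt[OF klin_Frob fstructD(1)[OF fstruct_lmult p]] Frob_lmult[of 1 l \<phi>] by simp
  show ?thesis
  proof (intro equalityI subsetI)
    fix x assume "x \<in> pimg (Frob 1) (Fpt q lmult \<phi>)"
    then obtain l where "l \<noteq> 0" "x = pt q (lmult (l ^ q) (Frob 1 \<phi>))"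
      unfolding pimg_def Fpt_def using e by auto
    then show "x \<in> Fpt q lmult (Frob 1 \<phi>)" unfolding Fpt_def by auto
  next
    fix x assume "x \<in> Fpt q lmult (Frob 1 \<phi>)"
    then obtain m where m: "m \<noteq> 0" "x = pt q (lmult m (Frob 1 \<phi>))" unfolding Fpt_def by auto
    define l where "l = m ^ (q ^ (n - 1))"
    have l: "l ^ q = m" "l \<noteq> 0" using q_root(2)[of m] m(1) unfolding l_def by auto
    then have "x = Frob 1 ` pt q (lmult l \<phi>)" using e m by simp
    then show "x \<in> pimg (Frob 1) (Fpt q lmult \<phi>)" unfolding pimg_def Fpt_def using l by auto
  qed
qed

lemma pimg_Frob_pow:
  assumes p: "\<phi> \<in> Emaps q"
  shows "(pimg (Frob 1) ^^ k) (Fpt q lmult \<phi>) = Fpt q lmult (Frob k \<phi>)"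
proof (induction k)
  case 0 then show ?case by (simp add: Frob_0)
next
  case (Suc k)
  then show ?case using pimg_Frob_Fpt[OF Frob_Emaps[OF p, of k]] Frob_Frob[of 1 k \<phi>] by simp
qed

lemma simg_Frob_std_spread: "simg (Frob 1) (spread_of q lmult) = spread_of q lmult"
proof (intro equalityI subsetI)
  fix S :: "'a mp set set" assume "S \<in> simg (Frob 1) (spread_of q lmult)"
  then obtain \<phi> where p: "S = pimg (Frob 1) (Fpt q lmult \<phi>)" "\<phi> \<in> Emaps q" "\<phi> \<noteq> fzero"
    unfolding simg_def spread_of_def by blast
  have "S = Fpt q lmult (Frob 1 \<phi>)" using p pimg_Frob_Fpt by simp
  then show "S \<in> spread_of q lmult" unfolding spread_of_def
    using Frob_Emaps[OF p(2)] klin_fzero_iff[OF klin_Frob p(2)] p(3) by blast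
next
  fix S :: "'a mp set set" assume "S \<in> spread_of q lmult"
  then obtain \<psi> where p: "S = Fpt q lmult \<psi>" "\<psi> \<in> Emaps q" "\<psi> \<noteq> fzero"
    unfolding spread_of_def by blast
  let ?\<phi> = "Frob (n - 1) \<psi>"
  have e: "Frob 1 ?\<phi> = \<psi>" using n2 by (simp add: Frob_Frob Frob_n)
  have ph: "?\<phi> \<in> Emaps q" "?\<phi> \<noteq> fzero" using Frob_Emaps[OF p(2)] e p(3) Frob_fzero by auto
  have "S = pimg (Frob 1) (Fpt q lmult ?\<phi>)" using pimg_Frob_Fpt[OF ph(1)] e p(1) by simp
  then show "S \<in> simg (Frob 1) (spread_of q lmult)" unfolding simg_def spread_of_def using ph by blast
qed

lemma field_aut_frob: "field_aut (\<lambda>l::'a. l ^ q)"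
  unfolding field_aut_def
proof (intro conjI allI)
  show "bij (\<lambda>l::'a. l ^ q)"
    by (rule bij_betw_byWitness[where f' = "\<lambda>l. l ^ (q ^ (n - 1))"]) (use q_root in auto)
  fix a b :: 'a
  show "(a + b) ^ q = a ^ q + b ^ q" using frob_add[of a b 1] by simp
  show "(a * b) ^ q = a ^ q * b ^ q" by (rule power_mult_distrib)
qed

lemma induced_Frob: "induced_semilinear q lmult (Frob 1)"
  unfolding induced_semilinear_def
proof (intro exI conjI)
  show "field_aut (\<lambda>l::'a. l ^ q)" by (rule field_aut_frob)
  show "bij_betw (Frob 1) (Emaps q) (Emaps q)" by (rule klinD(1)[OF klin_Frob])
  show "\<forall>\<phi>\<in>Emaps q. \<forall>\<psi>\<in>Emaps q. Frob 1 (fadd \<phi> \<psi>) = fadd (Frob 1 \<phi>) (Frob 1 \<psi>)"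
    by (simp add: Frob_fadd)
  show "\<forall>l. \<forall>\<phi>\<in>Emaps q. Frob 1 (lmult l \<phi>) = lmult (l ^ q) (Frob 1 \<phi>)"
    using Frob_lmult[of 1] by simp
  show "\<forall>\<phi>\<in>Emaps q. \<phi> \<noteq> fzero \<longrightarrow> pimg (Frob 1) (Fpt q lmult \<phi>) = Fpt q lmult (Frob 1 \<phi>)"
    using pimg_Frob_Fpt by blast
qed

lemma Frob_order: "\<forall>S\<in>spread_of q lmult. (pimg (Frob 1) ^^ n) S = S"
  unfolding spread_of_def using pimg_Frob_pow Frob_n by auto

lemma Frob_not_fixed: "0 < k \<Longrightarrow> k < n \<Longrightarrow> \<exists>S\<in>spread_of q lmult. (pimg (Frob 1) ^^ k) S \<noteq> S"
proof -
  assume k: "0 < k" "k < n"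
  let ?S = "Fpt q lmult (\<lambda>x::'a. x)"
  have S: "?S \<in> spread_of q lmult" unfolding spread_of_def using id_Emaps id_nonzero by blast
  have "(pimg (Frob 1) ^^ k) ?S \<noteq> ?S"
  proof
    assume "(pimg (Frob 1) ^^ k) ?S = ?S"
    then have "Fpt q lmult (Frob k (\<lambda>x. x)) = ?S" using pimg_Frob_pow[OF id_Emaps] by simp
    then obtain l where l: "l \<noteq> 0" "Frob k (\<lambda>x. x) = lmult l (\<lambda>x::'a. x)"
      using Fpt_eq[OF fstruct_lmult id_Emaps Frob_Emaps[OF id_Emaps]] by blast
    have ev: "x ^ (q ^ k) = l * x" for x :: 'a
      using fun_cong[OF l(2), of x] unfolding Frob_def lmult_def by simp
    have "l = 1" using ev[of 1] by simp
    then have "{x :: 'a. x ^ (q ^ k) = x} = UNIV" using ev by auto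
    moreover have "q ^ k \<ge> 2"
    proof -
      have "q ^ 1 \<le> q ^ k" using q2 k(1) by (intro power_increasing) auto
      then show ?thesis using q2 by simp
    qed
    ultimately have "card (UNIV :: 'a set) \<le> q ^ k" using card_power_fixed_le[of "q ^ k", where 'a='a] by simp
    moreover have "q ^ k < q ^ n" using q2 k(2) by (intro power_strict_increasing) auto
    ultimately show False using cardF by simp
  qed
  then show ?thesis using S by blast
qed

text \<open>The elements of the standard spread fixed by \<open>Frob 1\<close> are exactly those of \<open>R_1\<close>: if
  \<open>\<phi>(x)^q = l \<phi>(x)\<close> for all \<open>x\<close>, then \<open>\<phi>/\<phi>(x_0)\<close> takes values in \<open>F_q\<close>, hence is a trace functional.\<close>

lemma Frob_trf: "Frob 1 (trf l) = trf l"
  unfolding Frob_def tr_functional_def using tr_pow_q by simp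

lemma Frob_eigenvector:
  assumes p: "\<phi> \<in> Emaps q" "\<phi> \<noteq> fzero" and l: "l \<noteq> 0" "Frob 1 \<phi> = lmult l \<phi>"
  shows "\<exists>b m. b \<noteq> 0 \<and> m \<noteq> 0 \<and> \<phi> = lmult b (trf m)"
proof -
  have ev: "\<phi> x ^ q = l * \<phi> x" for x using fun_cong[OF l(2), of x] unfolding Frob_def lmult_def by simp
  obtain x0 where x0: "\<phi> x0 \<noteq> 0" using p(2) unfolding fzero_def by (metis ext)
  define b where "b = \<phi> x0"
  have b: "b \<noteq> 0" "b ^ q = l * b" using x0 ev[of x0] unfolding b_def by auto
  define \<psi> where "\<psi> = lmult (inverse b) \<phi>"
  have "\<psi> x ^ q = \<psi> x" for x
  proof -
    have "\<psi> x ^ q = inverse (b ^ q) * \<phi> x ^ q"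
      unfolding \<psi>_def lmult_def by (simp add: power_mult_distrib power_inverse)
    also have "\<dots> = inverse (l * b) * (l * \<phi> x)" using b ev by simp
    also have "\<dots> = \<psi> x" using l(1) b(1) unfolding \<psi>_def lmult_def by (simp add: field_simps)
    finally show ?thesis .
  qed
  moreover have "\<psi> \<in> Emaps q" unfolding \<psi>_def by (rule fstructD(1)[OF fstruct_lmult p(1)])
  ultimately have "\<psi> \<in> Kfun" unfolding Kfun_def Emaps_def Kf_def by auto
  then obtain m where m: "\<psi> = trf m" using Kfun_trf by blast
  have "\<psi> x0 = 1" unfolding \<psi>_def lmult_def using b(1) b_def by simp
  then have "m \<noteq> 0" using m trf_eq_fzero unfolding fzero_def by (metis one_neq_zero)
  moreover have "\<phi> = lmult b \<psi>" unfolding \<psi>_def lmult_def using b(1) by (simp add: mult.assoc[symmetric])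
  ultimately show ?thesis using b(1) m by blast
qed

lemma Frob_fixed_elements:
  "{S \<in> spread_of q lmult. pimg (Frob 1) S = S} = (R1 q n :: 'a mp set set set)"
proof (intro equalityI subsetI)
  fix S :: "'a mp set set" assume "S \<in> {S \<in> spread_of q lmult. pimg (Frob 1) S = S}"
  then obtain \<phi> where p: "S = Fpt q lmult \<phi>" "\<phi> \<in> Emaps q" "\<phi> \<noteq> fzero"
    and fx: "pimg (Frob 1) S = S"
    unfolding spread_of_def by blast
  have "Fpt q lmult (Frob 1 \<phi>) = Fpt q lmult \<phi>" using fx p pimg_Frob_Fpt by simp
  then obtain l where "l \<noteq> 0" "Frob 1 \<phi> = lmult l \<phi>"
    using Fpt_eq[OF fstruct_lmult p(2) Frob_Emaps[OF p(2)]] by blast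
  then obtain b m where bm: "b \<noteq> 0" "m \<noteq> 0" "\<phi> = lmult b (trf m)"
    using Frob_eigenvector[OF p(2,3)] by blast
  then have "S = Fpt q lmult (trf m)" using p(1) Fpt_scale[OF fstruct_lmult trf_Emaps] by simp
  then show "S \<in> R1 q n" unfolding R1_eq using bm by blast
next
  fix S :: "'a mp set set" assume S: "S \<in> R1 q n"
  then obtain l where l: "S = Fpt q lmult (trf l)" "l \<noteq> 0" unfolding R1_eq by blast
  have "pimg (Frob 1) S = S" using l(1) pimg_Frob_Fpt[OF trf_Emaps] Frob_trf by simp
  then show "S \<in> {S \<in> spread_of q lmult. pimg (Frob 1) S = S}" using R1_sub_std_spread S by blast
qed

lemma cond_D2_std_spread: "cond_D2 q n (spread_of q lmult) (R1 q n :: 'a mp set set set)"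
  unfolding cond_D2_def
proof (intro exI conjI)
  show "fstruct q (lmult :: 'a \<Rightarrow> _)" by (rule fstruct_lmult)
  show "spread_of q lmult = spread_of q (lmult :: 'a \<Rightarrow> _)" by simp
  show "klin_bij q (Frob 1)" by (rule klin_Frob)
  show "simg (Frob 1) (spread_of q lmult) = spread_of q lmult" by (rule simg_Frob_std_spread)
  show "induced_semilinear q lmult (Frob 1)" by (rule induced_Frob)
  show "\<forall>S\<in>spread_of q lmult. (pimg (Frob 1) ^^ n) S = S" by (rule Frob_order)
  show "\<forall>k. 0 < k \<and> k < n \<longrightarrow> (\<exists>S\<in>spread_of q lmult. (pimg (Frob 1) ^^ k) S \<noteq> S)"
    using Frob_not_fixed by blast
  show "{S \<in> spread_of q lmult. pimg (Frob 1) S = S} = R1 q n" by (rule Frob_fixed_elements)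
  show "subgeometry q n lmult (R1 q n :: 'a mp set set set)" by (rule subgeometry_R1)
qed

end

section \<open>The trace adjoint\<close>

text \<open>The trace form \<open>\<langle>x, y\<rangle> = Tr(x*y)\<close> is nondegenerate, so every \<open>\<phi> \<in> E\<close> has an adjoint
  \<open>adj \<phi>\<close> with \<open>Tr(adj \<phi> y * x) = Tr(\<phi> x * y)\<close>.  The adjoint is an \<open>F_q\<close>-linear involution of
  \<open>E\<close>; multiplications \<open>t_\<lambda>\<close> are self-adjoint, and the adjoint of \<open>t_a \<circ> Tr \<circ> t_l\<close> is
  \<open>t_l \<circ> Tr \<circ> t_a\<close>, so \<open>adj\<close> fixes \<open>I\<close> pointwise and interchanges \<open>R_1\<close> and \<open>R_2\<close>.\<close>

context qn_field
begin

definition adj :: "'a mp \<Rightarrow> 'a mp" where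
  "adj \<phi> = (\<lambda>y. THE l. \<forall>x. Tr (l * x) = Tr (\<phi> x * y))"

lemma adj_spec: "\<phi> \<in> Emaps q \<Longrightarrow> Tr (adj \<phi> y * x) = Tr (\<phi> x * y)"
proof -
  assume p: "\<phi> \<in> Emaps q"
  have "(\<lambda>x. Tr (\<phi> x * y)) \<in> Kfun"
    using p unfolding Kfun_def Emaps_def
    by (auto simp: distrib_right tr_add tr_in_Fq mult.assoc tr_Kmult)
  then obtain l where l: "\<forall>x. Tr (l * x) = Tr (\<phi> x * y)"
    using Kfun_tr_repr by (metis (no_types, lifting))
  have "adj \<phi> y = l" unfolding adj_def
  proof (rule the_equality)
    show "\<forall>x. Tr (l * x) = Tr (\<phi> x * y)" by (rule l)
    fix l' assume l': "\<forall>x. Tr (l' * x) = Tr (\<phi> x * y)"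
    show "l' = l" by (rule tr_form_inj) (use l l' in simp)
  qed
  then show ?thesis using l by simp
qed

lemma adj_unique:
  assumes p: "\<phi> \<in> Emaps q" and h: "\<And>x y. Tr (\<psi> y * x) = Tr (\<phi> x * y)"
  shows "adj \<phi> = \<psi>"
proof
  fix y show "adj \<phi> y = \<psi> y" by (rule tr_form_inj) (use adj_spec[OF p] h in simp)
qed

lemma adj_Emaps:
  assumes p: "\<phi> \<in> Emaps q"
  shows "adj \<phi> \<in> Emaps q"
  unfolding Emaps_def mem_Collect_eq
proof (intro conjI allI ballI)
  fix y1 y2 :: 'a
  show "adj \<phi> (y1 + y2) = adj \<phi> y1 + adj \<phi> y2"
    by (rule tr_form_inj) (simp add: adj_spec[OF p] distrib_right distrib_left tr_add)
next
  fix c y :: 'a assume c: "c \<in> Fq"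
  show "adj \<phi> (c * y) = c * adj \<phi> y"
  proof (rule tr_form_inj)
    fix x
    have "Tr (adj \<phi> (c * y) * x) = Tr (c * (\<phi> x * y))" using adj_spec[OF p] by (simp add: mult.left_commute)
    also have "\<dots> = c * Tr (adj \<phi> y * x)" using adj_spec[OF p] tr_Kmult[OF c] by simp
    also have "\<dots> = Tr (c * adj \<phi> y * x)" using tr_Kmult[OF c] by (simp add: mult.assoc)
    finally show "Tr (adj \<phi> (c * y) * x) = Tr (c * adj \<phi> y * x)" .
  qed
qed

lemma adj_adj:
  assumes p: "\<phi> \<in> Emaps q"
  shows "adj (adj \<phi>) = \<phi>"
proof (rule adj_unique[OF adj_Emaps[OF p]])
  fix x y show "Tr (\<phi> y * x) = Tr (adj \<phi> x * y)" using adj_spec[OF p, of x y] by simp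
qed

lemma adj_fadd: "\<phi> \<in> Emaps q \<Longrightarrow> \<psi> \<in> Emaps q \<Longrightarrow> adj (fadd \<phi> \<psi>) = fadd (adj \<phi>) (adj \<psi>)"
  by (rule adj_unique[OF fadd_Emaps]) (simp_all add: fadd_def adj_spec distrib_right tr_add)

lemma adj_kscal: "c \<in> Fq \<Longrightarrow> \<phi> \<in> Emaps q \<Longrightarrow> adj (kscal c \<phi>) = kscal c (adj \<phi>)"
  by (rule adj_unique[OF kscal_Emaps]) (simp_all add: kscal_def adj_spec mult.assoc tr_Kmult)

lemma klin_adj: "klin_bij q adj"
  unfolding klin_bij_def
proof (intro conjI ballI)
  show "bij_betw adj (Emaps q) (Emaps q)"
    by (rule bij_betw_byWitness[where f' = adj]) (auto simp: adj_adj adj_Emaps)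
qed (simp_all add: adj_fadd adj_kscal)

lemma mult_map_Emaps: "(\<lambda>x. l * x) \<in> Emaps q"
  unfolding Emaps_def by (simp add: distrib_left mult.left_commute)

lemma adj_mult: "adj (\<lambda>x. l * x) = (\<lambda>x. l * x)"
proof (rule adj_unique)
  show "(\<lambda>x. l * x) \<in> Emaps q" by (rule mult_map_Emaps)
qed (simp add: mult_ac)

lemma adj_R1_map: "adj (\<lambda>x. a * Tr (l * x)) = (\<lambda>y. l * Tr (a * y))"
proof (rule adj_unique)
  show "(\<lambda>x. a * Tr (l * x)) \<in> Emaps q"
    using fstructD(1)[OF fstruct_lmult trf_Emaps, of a l] unfolding lmult_def tr_functional_def .
  fix x y
  have "Tr (l * Tr (a * y) * x) = Tr (a * y) * Tr (l * x)"
    using tr_Kmult[OF tr_in_Fq[of "a * y"], of "l * x"] by (simp add: mult_ac)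
  also have "\<dots> = Tr (a * Tr (l * x) * y)"
    using tr_Kmult[OF tr_in_Fq[of "l * x"], of "a * y"] by (simp add: mult_ac)
  finally show "Tr (l * Tr (a * y) * x) = Tr (a * Tr (l * x) * y)" .
qed

lemma adj_fixes_Iset_points: "p \<in> (Iset q :: 'a mp set set) \<Longrightarrow> adj ` p = p"
proof -
  assume "p \<in> Iset q"
  then obtain l :: 'a where l: "p = pt q (\<lambda>x. l * x)" unfolding Iset_def by blast
  show ?thesis using klin_img_pt[OF klin_adj mult_map_Emaps] adj_mult[of l] l by simp
qed

lemma Iset_Pow: "(Iset q :: 'a mp set set) \<subseteq> Pow (Emaps q)"
  unfolding Iset_def using pt_subset[OF mult_map_Emaps] by blast

lemma pimg_adj_Iset: "pimg adj (Iset q) = Iset q"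
  unfolding pimg_def using adj_fixes_Iset_points by simp

lemma simg_adj_R1: "simg adj (R1 q n) = R2 q n"
proof -
  have e: "pimg adj {pt q (\<lambda>x. a * tr q n (l * x)) |a. a \<noteq> 0} = {pt q (\<lambda>x. l * tr q n (a * x)) |a. a \<noteq> 0}" for l
  proof -
    have "adj ` pt q (\<lambda>x. a * Tr (l * x)) = pt q (\<lambda>y. l * Tr (a * y))" for a
      using klin_img_pt[OF klin_adj, of "\<lambda>x. a * Tr (l * x)"] adj_R1_map[of a l]
        fstructD(1)[OF fstruct_lmult trf_Emaps, of a l] unfolding lmult_def tr_functional_def by simp
    then show ?thesis unfolding pimg_def by auto
  qed
  show ?thesis unfolding simg_def R1_def R2_def image_def using e by auto
qed

text \<open>\<open>adj\<close> is not the identity on points: for \<open>l \<notin> F_q\<close>, the adjoint of \<open>Tr \<circ> t_l\<close> is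
  \<open>t_l \<circ> Tr\<close>, which is not an \<open>F_q\<close>-multiple of it.\<close>

lemma adj_moves_a_point: "\<exists>\<phi>. \<phi> \<in> Emaps q \<and> \<phi> \<noteq> fzero \<and> pt q (adj \<phi>) \<noteq> pt q \<phi>"
proof -
  have "q ^ 1 < q ^ n" using q2 n2 by (intro power_strict_increasing) auto
  then have "Fq \<noteq> UNIV" using card_Kf cardF by auto
  then obtain l :: 'a where l: "l \<notin> Fq" by blast
  have lz: "l \<noteq> 0" using l subfield_Kf unfolding subfield_def by auto
  have tp: "adj (trf l) = (\<lambda>y. l * Tr y)"
    using adj_R1_map[of 1 l] unfolding tr_functional_def by simp
  have "pt q (adj (trf l)) \<noteq> pt q (trf l)"
  proof
    assume "pt q (adj (trf l)) = pt q (trf l)"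
    then obtain c where c: "c \<in> Fq" "c \<noteq> 0" "trf l = kscal c (adj (trf l))" using pt_eq by blast
    obtain y where y: "Tr y \<noteq> 0" using tr_nonzero by blast
    have "Tr (l * y) = c * (l * Tr y)"
      using fun_cong[OF c(3), of y] tp unfolding tr_functional_def kscal_def by simp
    then have "l = inverse (c * Tr y) * Tr (l * y)" using y c(2) by (simp add: field_simps)
    moreover have "inverse (c * Tr y) * Tr (l * y) \<in> Fq"
      using subfield_Kf c(1) tr_in_Fq unfolding subfield_def by auto
    ultimately show False using l by simp
  qed
  then show ?thesis using trf_Emaps trf_eq_fzero lz by blast
qed

lemma D_spreads_standard:
  "D_spreads q n (Iset q) (spread_of q lmult) (simg adj (spread_of q lmult))"
proof -
  have D0: "desarg_spread q (spread_of q lmult)" unfolding desarg_spread_def using fstruct_lmult by blast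
  have "Iset q \<in> simg adj (spread_of q lmult)"
    using simg_memI[OF Iset_in_std_spread, of adj] pimg_adj_Iset by simp
  moreover have "R2 q n \<subseteq> simg adj (spread_of q lmult)"
    using image_mono[OF R1_sub_std_spread, of "pimg adj"] simg_adj_R1 unfolding simg_def by simp
  moreover have "cond_D2 q n (simg adj (spread_of q lmult)) (R2 q n)"
    using cond_D2_along[OF klin_adj cond_D2_std_spread] simg_adj_R1 by simp
  ultimately show ?thesis
    unfolding D_spreads_def
    by (intro conjI D0 desarg_spread_along[OF klin_adj D0] Iset_in_std_spread R1_sub_std_spread
      cond_D2_std_spread)
qed

lemma adj_conjugate_collineation:
  fixes f :: "'a mp \<Rightarrow> 'a mp"
  assumes f: "klin_bij q f"
  defines "\<Phi> \<equiv> \<lambda>p. conjugate q f adj ` p"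
  shows "involutory_collineation q \<Phi>"
    and "\<forall>x\<in>pimg f (Iset q). \<Phi> x = x"
    and "(\<lambda>S. \<Phi> ` S) ` simg f (spread_of q lmult) = simg f (simg adj (spread_of q lmult))"
proof -
  obtain \<phi> where \<phi>: "\<phi> \<in> Emaps q" "\<phi> \<noteq> fzero" "pt q (adj \<phi>) \<noteq> pt q \<phi>"
    using adj_moves_a_point by blast
  show "involutory_collineation q \<Phi>"
    unfolding \<Phi>_def by (rule involutory_conjugate[OF f klin_adj adj_adj \<phi>])
  show "\<forall>x\<in>pimg f (Iset q). \<Phi> x = x"
  proof
    fix x assume "x \<in> pimg f (Iset q)"
    then obtain p where p: "p \<in> Iset q" "x = f ` p" unfolding pimg_def by blast
    then have "p \<subseteq> Emaps q" using Iset_Pow by blast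
    then show "\<Phi> x = x"
      unfolding \<Phi>_def p(2) by (rule conjugate_fixes_image[OF f _ adj_fixes_Iset_points[OF p(1)]])
  qed
  show "(\<lambda>S. \<Phi> ` S) ` simg f (spread_of q lmult) = simg f (simg adj (spread_of q lmult))"
    unfolding \<Phi>_def simg_eq_image[symmetric]
    by (rule simg_conjugate[OF f spread_Pow[OF fstruct_lmult]])
qed

end

theorem theorem5p2:
  fixes q n :: nat and X :: "('a::{finite,field} \<Rightarrow> 'a) set set"
  assumes "n \<ge> 2" and "q \<ge> 2" and "card (UNIV :: 'a set) = q ^ n" and "D_subspace q n X"
  shows "\<exists>D1 D2. desarg_spread q D1 \<and> desarg_spread q D2 \<and>
           X \<in> D1 \<and> X \<in> D2 \<and> R1 q n \<subseteq> D1 \<and> R2 q n \<subseteq> D2 \<and>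
           cond_D2 q n D1 (R1 q n) \<and> cond_D2 q n D2 (R2 q n) \<and>
           (\<exists>\<Phi>. involutory_collineation q \<Phi> \<and> (\<forall>x\<in>X. \<Phi> x = x) \<and> (\<lambda>S. \<Phi> ` S) ` D1 = D2)"
proof -
  interpret qn_field q n "TYPE('a)" using assms(1-3) by unfold_locales
  obtain f where f: "klin_bij q f" "simg f (R1 q n) = R1 q n" "simg f (R2 q n) = R2 q n"
    and X: "X = pimg f (Iset q)"
    using assms(4) unfolding D_subspace_def H_Segre_def by blast
  let ?D1 = "simg f (spread_of q lmult)" and ?D2 = "simg f (simg adj (spread_of q lmult))"
  let ?\<Phi> = "\<lambda>p. conjugate q f adj ` p"
  have "D_spreads q n X ?D1 ?D2" unfolding X by (rule D_spreads_along[OF f D_spreads_standard])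
  moreover have "involutory_collineation q ?\<Phi>" "\<forall>x\<in>X. ?\<Phi> x = x" "(\<lambda>S. ?\<Phi> ` S) ` ?D1 = ?D2"
    unfolding X by (rule adj_conjugate_collineation[OF f(1)])+
  ultimately show ?thesis unfolding D_spreads_def by (intro exI conjI) auto
qed

end
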